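(* Let $p>0$ and, for $\lambda<1$, let $v(x;\lambda)$ be the unique $C^1(\mathbb{R})$ solution of $-v''+v-(2p+1)(p+1)\operatorname{sech}^2(px)v=\lambda v$ with $\lim_{x\to+\infty}v(x;\lambda)e^{\sqrt{1-\lambda}x}=1$. Assume that $v(\cdot;\lambda_1)$ has a simple zero at $x=x_1\in\mathbb{R}$ for some $\lambda_1\in(-\infty,1)$. Then there exists a unique $C^1$ function $\lambda\mapsto x_0(\lambda)$, defined for $\lambda$ near $\lambda_1$, such that $v(\cdot;\lambda)$ has a simple zero at $x=x_0(\lambda)$, $x_0(\lambda_1)=x_1$, and $x_0'(\lambda_1)>0$. *)

theory Defs
  imports "HOL-Analysis.Analysis"
begin

definition is_sol :: "real \<Rightarrow> real \<Rightarrow> (real \<Rightarrow> real) \<Rightarrow> bool" where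
  "is_sol p lam v \<longleftrightarrow>
     (\<exists>v'. \<forall>x. (v has_real_derivative v' x) (at x) \<and>
        (v' has_real_derivative
           ((1 - lam) * v x - (2 * p + 1) * (p + 1) * (1 / cosh (p * x))\<^sup>2 * v x)) (at x))
   \<and> ((\<lambda>x. v x * exp (sqrt (1 - lam) * x)) \<longlongrightarrow> 1) at_top"

definition simple_zero :: "(real \<Rightarrow> real) \<Rightarrow> real \<Rightarrow> bool" where
  "simple_zero f x \<longleftrightarrow> f x = 0 \<and> f differentiable (at x) \<and> deriv f x \<noteq> 0"

end

theory Submission
  imports Defs
begin

text \<open>Write \<open>k = \<surd>(1 - \<lambda>)\<close> and \<open>h\<close> for the \<open>sech\<^sup>2\<close> potential. For the Jost solution \<open>v(\<cdot>; \<lambda>)\<close>,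
  the factor \<open>u = e\<^sup>k\<^sup>x v\<close> satisfies the Volterra equation
  \<open>u(x) - 1 = -\<integral>\<^sub>x\<^sup>\<infinity> e\<^sup>2\<^sup>k\<^sup>(\<^sup>x\<^sup>-\<^sup>t\<^sup>) \<integral>\<^sub>t\<^sup>\<infinity> h u\<close>, and Gronwall's inequality bounds \<open>u\<close>, and the
  difference of two such factors, uniformly in \<open>x\<close>. Hence \<open>v\<close> and \<open>v'\<close> depend continuously
  on \<open>\<lambda>\<close>, uniformly on half-lines, with a uniform exponential decay bound. Near a simple zero
  \<open>x\<^sub>1\<close> of \<open>v(\<cdot>; \<lambda>\<^sub>1)\<close>, \<open>v'\<close> keeps its sign on a box around \<open>(\<lambda>\<^sub>1, x\<^sub>1)\<close>, so each \<open>v(\<cdot>; \<lambda>)\<close> has exactly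
  one zero \<open>x\<^sub>0(\<lambda>)\<close> there. The Wronskian identity
  \<open>v\<^sub>\<mu> v\<^sub>\<lambda>' - v\<^sub>\<mu>' v\<^sub>\<lambda> = (\<lambda> - \<mu>) \<integral>\<^sub>x\<^sup>\<infinity> v\<^sub>\<mu> v\<^sub>\<lambda>\<close>, evaluated at \<open>x\<^sub>0(\<mu>)\<close>, yields
  \<open>x\<^sub>0'(\<lambda>) = \<integral>\<^sub>x\<^sub>0\<^sup>\<infinity> v\<^sup>2 / v'(x\<^sub>0)\<^sup>2 > 0\<close>, which is continuous in \<open>\<lambda>\<close>.\<close>

section \<open>Tail integrals of exponentially decaying functions\<close>

lemma mono_bounded_tendsto_at_top:
  fixes f :: "real \<Rightarrow> real"
  assumes mono: "\<And>x y. a \<le> x \<Longrightarrow> x \<le> y \<Longrightarrow> f x \<le> f y"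
    and bounded: "\<And>x. a \<le> x \<Longrightarrow> f x \<le> B"
  shows "\<exists>L. (f \<longlongrightarrow> L) at_top"
proof -
  define L where "L = Sup (f ` {a..})"
  have bdd: "bdd_above (f ` {a..})" using bounded by (auto intro!: bdd_aboveI)
  have upper: "f x \<le> L" if "a \<le> x" for x unfolding L_def using bdd that by (auto intro!: cSUP_upper)
  have "(f \<longlongrightarrow> L) at_top"
  proof (rule order_tendstoI)
    fix y assume "y < L"
    then obtain x0 where "x0 \<ge> a" "y < f x0"
      unfolding L_def using less_cSUP_iff[OF _ bdd] by auto
    then show "\<forall>\<^sub>F x in at_top. y < f x"
      unfolding eventually_at_top_linorder by (intro exI[of _ x0]) (use mono in fastforce)
  next
    fix y assume "L < y"
    then show "\<forall>\<^sub>F x in at_top. f x < y"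
      unfolding eventually_at_top_linorder by (intro exI[of _ a]) (use upper in fastforce)
  qed
  then show ?thesis by blast
qed

lemma tendsto_exp_neg_mult_at_top:
  fixes \<kappa> :: real
  assumes "\<kappa> > 0"
  shows "((\<lambda>x. exp (-\<kappa>*x)) \<longlongrightarrow> 0) at_top"
proof -
  have "LIM x at_top. \<kappa> * x :> at_top"
    by (rule filterlim_tendsto_pos_mult_at_top[OF tendsto_const assms filterlim_ident])
  then have "LIM x at_top. - (\<kappa> * x) :> at_bot" by (simp add: filterlim_uminus_at_bot)
  then show ?thesis by (simp add: filterlim_compose[OF exp_at_bot])
qed

lemma integral_exp_neg_mult:
  fixes \<kappa> x R :: real
  assumes "\<kappa> > 0" "x \<le> R"
  shows "integral {x..R} (\<lambda>t. exp (-\<kappa>*t)) = (exp (-\<kappa>*x) - exp (-\<kappa>*R)) / \<kappa>"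
proof -
  have "((\<lambda>t. exp (-\<kappa>*t)) has_integral ((- exp (-\<kappa>*R)/\<kappa>) - (- exp (-\<kappa>*x)/\<kappa>))) {x..R}"
    by (rule fundamental_theorem_of_calculus[OF assms(2)])
       (use assms(1) in \<open>auto intro!: derivative_eq_intros
          simp flip: has_real_derivative_iff_has_vector_derivative simp: field_simps\<close>)
  then show ?thesis by (simp add: integral_unique diff_divide_distrib)
qed

lemma continuous_on_UNIV_integrable_on_interval:
  fixes g :: "real \<Rightarrow> real"
  shows "continuous_on UNIV g \<Longrightarrow> g integrable_on {x..R}"
  by (rule integrable_continuous_interval, erule continuous_on_subset, simp)

definition exp_decay :: "(real \<Rightarrow> real) \<Rightarrow> real \<Rightarrow> bool" where
  "exp_decay g a \<longleftrightarrow>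
     continuous_on UNIV g \<and> (\<exists>B \<kappa>. \<kappa> > 0 \<and> (\<forall>t\<ge>a. \<bar>g t\<bar> \<le> B * exp (-\<kappa>*t)))"

text \<open>\<open>\<integral>\<^sub>x\<^sup>\<infinity> g\<close>; a junk value unless the integrals over \<open>[x, R]\<close> converge, as they do for \<open>exp_decay g a\<close>.\<close>
definition tail_integral :: "(real \<Rightarrow> real) \<Rightarrow> real \<Rightarrow> real" where
  "tail_integral g x = Lim at_top (\<lambda>R. integral {x..R} g)"

lemma exp_decayI:
  "continuous_on UNIV g \<Longrightarrow> \<kappa> > 0 \<Longrightarrow> (\<And>t. t \<ge> a \<Longrightarrow> \<bar>g t\<bar> \<le> B * exp (-\<kappa>*t)) \<Longrightarrow> exp_decay g a"
  unfolding exp_decay_def by blast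

lemma exp_decayE:
  assumes "exp_decay g a"
  obtains \<kappa> B where "continuous_on UNIV g" "\<kappa> > 0" "B \<ge> 0" "\<And>t. t \<ge> a \<Longrightarrow> \<bar>g t\<bar> \<le> B * exp (-\<kappa>*t)"
proof -
  obtain B \<kappa> where "continuous_on UNIV g" "\<kappa> > 0" and bound: "\<And>t. t \<ge> a \<Longrightarrow> \<bar>g t\<bar> \<le> B * exp (-\<kappa>*t)"
    using assms unfolding exp_decay_def by blast
  moreover have "0 \<le> B * exp (-\<kappa>*a)" using bound[of a] by linarith
  then have "B \<ge> 0" by (simp add: zero_le_mult_iff)
  ultimately show ?thesis using that by blast
qed

lemma exp_decay_continuous_on: "exp_decay g a \<Longrightarrow> continuous_on UNIV g"
  unfolding exp_decay_def by blast

lemma exp_decay_mono: "exp_decay g a \<Longrightarrow> a \<le> b \<Longrightarrow> exp_decay g b"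
  unfolding exp_decay_def by (meson order_trans)

lemma exp_decay_zero: "exp_decay (\<lambda>t. 0) a"
  by (rule exp_decayI[where \<kappa>=1 and B=0]) auto

lemma exp_decay_exp: "\<kappa> > 0 \<Longrightarrow> exp_decay (\<lambda>t. exp (-\<kappa>*t)) a"
  by (rule exp_decayI[where \<kappa>=\<kappa> and B=1]) (auto intro!: continuous_intros)

lemma exp_neg_mult_le_shift:
  fixes \<kappa> \<kappa>' a t :: real
  assumes "\<kappa> \<le> \<kappa>'" "a \<le> t"
  shows "exp (-\<kappa>'*t) \<le> exp (-(\<kappa>'-\<kappa>)*a) * exp (-\<kappa>*t)"
proof -
  have "-\<kappa>'*t \<le> -(\<kappa>'-\<kappa>)*a + -\<kappa>*t"
    using mult_left_mono[OF assms(2), of "\<kappa>'-\<kappa>"] assms(1) by (simp add: algebra_simps)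
  then show ?thesis by (simp flip: exp_add)
qed

lemma exp_decay_add:
  assumes "exp_decay f a" "exp_decay g a"
  shows "exp_decay (\<lambda>t. f t + g t) a"
proof -
  obtain B1 k1 where f: "continuous_on UNIV f" "k1 > 0" "B1 \<ge> 0" "\<And>t. t \<ge> a \<Longrightarrow> \<bar>f t\<bar> \<le> B1 * exp (-k1*t)"
    using exp_decayE[OF assms(1)] by blast
  obtain B2 k2 where g: "continuous_on UNIV g" "k2 > 0" "B2 \<ge> 0" "\<And>t. t \<ge> a \<Longrightarrow> \<bar>g t\<bar> \<le> B2 * exp (-k2*t)"
    using exp_decayE[OF assms(2)] by blast
  define k where "k = min k1 k2"
  show ?thesis
  proof (rule exp_decayI[where \<kappa>=k and B="B1 * exp (-(k1-k)*a) + B2 * exp (-(k2-k)*a)"])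
    show "continuous_on UNIV (\<lambda>t. f t + g t)" using f g by (intro continuous_intros)
    show "k > 0" using f g unfolding k_def by simp
    fix t assume t: "a \<le> t"
    have "\<bar>f t + g t\<bar> \<le> B1 * exp (-k1*t) + B2 * exp (-k2*t)"
      using abs_triangle_ineq[of "f t" "g t"] f(4)[OF t] g(4)[OF t] by linarith
    also have "\<dots> \<le> B1 * (exp (-(k1-k)*a) * exp (-k*t)) + B2 * (exp (-(k2-k)*a) * exp (-k*t))"
      using t f(3) g(3) by (intro add_mono mult_left_mono exp_neg_mult_le_shift) (auto simp: k_def)
    finally show "\<bar>f t + g t\<bar> \<le> (B1 * exp (-(k1-k)*a) + B2 * exp (-(k2-k)*a)) * exp (-k*t)"
      by (simp add: algebra_simps)
  qed
qed

lemma exp_decay_cmult: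
  assumes "exp_decay f a"
  shows "exp_decay (\<lambda>t. C * f t) a"
proof -
  obtain B k where f: "continuous_on UNIV f" "k > 0" "B \<ge> 0" "\<And>t. t \<ge> a \<Longrightarrow> \<bar>f t\<bar> \<le> B * exp (-k*t)"
    using exp_decayE[OF assms] by blast
  show ?thesis
  proof (rule exp_decayI[where \<kappa>=k and B="\<bar>C\<bar> * B"])
    fix t assume "a \<le> t"
    then show "\<bar>C * f t\<bar> \<le> \<bar>C\<bar> * B * exp (-k*t)"
      using f(4) by (simp add: abs_mult mult.assoc mult_left_mono)
  qed (use f in \<open>auto intro: continuous_intros\<close>)
qed

lemma exp_decay_diff: "exp_decay f a \<Longrightarrow> exp_decay g a \<Longrightarrow> exp_decay (\<lambda>t. f t - g t) a"
  using exp_decay_add[of f a "\<lambda>t. (-1) * g t"] exp_decay_cmult[of g a "-1"] by simp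

lemma exp_decay_dominated:
  assumes "exp_decay g a" "continuous_on UNIV f" "\<And>t. t \<ge> a \<Longrightarrow> \<bar>f t\<bar> \<le> \<bar>g t\<bar>"
  shows "exp_decay f a"
  using assms unfolding exp_decay_def by (meson order_trans)

lemma exp_decay_abs: "exp_decay g a \<Longrightarrow> exp_decay (\<lambda>t. \<bar>g t\<bar>) a"
  by (rule exp_decay_dominated) (auto intro: continuous_intros exp_decay_continuous_on)

lemma exp_decay_mult_bounded:
  assumes "exp_decay g a" "continuous_on UNIV f" "\<And>t. t \<ge> a \<Longrightarrow> \<bar>f t\<bar> \<le> M"
  shows "exp_decay (\<lambda>t. f t * g t) a"
proof (rule exp_decay_dominated)
  show "exp_decay (\<lambda>t. M * \<bar>g t\<bar>) a" by (intro exp_decay_cmult exp_decay_abs assms)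
  show "continuous_on UNIV (\<lambda>t. f t * g t)"
    using assms(1,2) by (intro continuous_intros) (auto intro: exp_decay_continuous_on)
  fix t assume "a \<le> t"
  then have "\<bar>f t * g t\<bar> \<le> M * \<bar>g t\<bar>" using assms(3) by (simp add: abs_mult mult_right_mono)
  then show "\<bar>f t * g t\<bar> \<le> \<bar>M * \<bar>g t\<bar>\<bar>" by (rule order_trans[OF _ abs_ge_self])
qed

lemma nonneg_integral_convergent:
  fixes g :: "real \<Rightarrow> real"
  assumes g: "continuous_on UNIV g" "\<And>t. t \<ge> x \<Longrightarrow> 0 \<le> g t"
    and bound: "\<kappa> > 0" "\<And>t. t \<ge> x \<Longrightarrow> g t \<le> B * exp (-\<kappa>*t)"
  shows "\<exists>L. ((\<lambda>R. integral {x..R} g) \<longlongrightarrow> L) at_top"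
proof (rule mono_bounded_tendsto_at_top[where a=x and B="B * exp (-\<kappa>*x) / \<kappa>"])
  fix y z assume "x \<le> y" "y \<le> z"
  then show "integral {x..y} g \<le> integral {x..z} g"
    using g by (intro integral_subset_le continuous_on_UNIV_integrable_on_interval) auto
next
  fix y assume "x \<le> y"
  have "integral {x..y} g \<le> integral {x..y} (\<lambda>t. B * exp (-\<kappa>*t))"
    using bound(2) by (intro integral_le continuous_on_UNIV_integrable_on_interval g(1) continuous_intros) auto
  also have "\<dots> = B * ((exp (-\<kappa>*x) - exp (-\<kappa>*y)) / \<kappa>)"
    using integral_exp_neg_mult[OF bound(1) \<open>x \<le> y\<close>] by simp
  also have "\<dots> \<le> B * exp (-\<kappa>*x) / \<kappa>"
  proof -
    have "0 \<le> B * exp (-\<kappa>*x)" using g(2)[of x] bound(2)[of x] by simp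
    then have "B \<ge> 0" by (simp add: zero_le_mult_iff)
    then show ?thesis using bound(1) by (simp add: divide_right_mono field_simps)
  qed
  finally show "integral {x..y} g \<le> B * exp (-\<kappa>*x) / \<kappa>" .
qed

text \<open>Adding the dominating function \<open>e(t) = B e\<^sup>-\<^sup>\<kappa>\<^sup>t\<close> makes the integrand nonnegative.\<close>
lemma exp_decay_integral_convergent:
  assumes "exp_decay g a" "a \<le> x"
  shows "\<exists>L. ((\<lambda>R. integral {x..R} g) \<longlongrightarrow> L) at_top"
proof -
  obtain B \<kappa> where g: "continuous_on UNIV g" "\<kappa> > 0"
    and bound: "\<And>t. t \<ge> a \<Longrightarrow> \<bar>g t\<bar> \<le> B * exp (-\<kappa>*t)"
    using exp_decayE[OF assms(1)] by blast
  define e where "e = (\<lambda>t::real. B * exp (-\<kappa>*t))"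
  have e: "continuous_on UNIV e" unfolding e_def by (intro continuous_intros)
  have dominated: "\<bar>g t\<bar> \<le> e t" if "t \<ge> x" for t
    unfolding e_def using bound assms(2) that by simp
  have "\<exists>L. ((\<lambda>R. integral {x..R} (\<lambda>t. g t + e t)) \<longlongrightarrow> L) at_top"
  proof (rule nonneg_integral_convergent[where \<kappa>=\<kappa> and B="2 * B"])
    show "continuous_on UNIV (\<lambda>t. g t + e t)" using g e by (intro continuous_intros)
    show "0 \<le> g t + e t" "g t + e t \<le> 2 * B * exp (-\<kappa>*t)" if "t \<ge> x" for t
      using dominated[OF that] unfolding e_def by (auto simp: abs_le_iff)
  qed (rule g(2))
  then obtain L1 where L1: "((\<lambda>R. integral {x..R} (\<lambda>t. g t + e t)) \<longlongrightarrow> L1) at_top" by blast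
  have "\<exists>L. ((\<lambda>R. integral {x..R} e) \<longlongrightarrow> L) at_top"
  proof (rule nonneg_integral_convergent[OF e _ g(2), where B=B])
    show "0 \<le> e t" "e t \<le> B * exp (-\<kappa>*t)" if "t \<ge> x" for t
      using dominated[OF that] unfolding e_def by auto
  qed
  then obtain L2 where L2: "((\<lambda>R. integral {x..R} e) \<longlongrightarrow> L2) at_top" by blast
  have "integral {x..R} g = integral {x..R} (\<lambda>t. g t + e t) - integral {x..R} e" for R
    using integral_add[OF continuous_on_UNIV_integrable_on_interval[OF g(1)]
        continuous_on_UNIV_integrable_on_interval[OF e]] by simp
  then have "((\<lambda>R. integral {x..R} g) \<longlongrightarrow> L1 - L2) at_top"
    using tendsto_diff[OF L1 L2] by simp
  then show ?thesis ..
qed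

lemma tail_integral_tendsto:
  assumes "exp_decay g a" "a \<le> x"
  shows "((\<lambda>R. integral {x..R} g) \<longlongrightarrow> tail_integral g x) at_top"
  using exp_decay_integral_convergent[OF assms] unfolding tail_integral_def
  by (metis tendsto_Lim trivial_limit_at_top_linorder)

lemma tail_integral_eqI:
  assumes "exp_decay g a" "a \<le> x" "((\<lambda>R. integral {x..R} g) \<longlongrightarrow> L) at_top"
  shows "tail_integral g x = L"
  using tendsto_unique[OF trivial_limit_at_top_linorder tail_integral_tendsto[OF assms(1,2)] assms(3)] .

lemma tail_integral_split:
  assumes "exp_decay g a" "a \<le> x" "x \<le> y"
  shows "tail_integral g x = integral {x..y} g + tail_integral g y"
proof (rule tail_integral_eqI[OF assms(1,2)])
  have "((\<lambda>R. integral {x..y} g + integral {y..R} g) \<longlongrightarrow> integral {x..y} g + tail_integral g y) at_top"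
    using assms by (intro tendsto_intros tail_integral_tendsto[OF assms(1)]) auto
  moreover have "\<forall>\<^sub>F R in at_top. integral {x..y} g + integral {y..R} g = integral {x..R} g"
    unfolding eventually_at_top_linorder using assms(3)
    by (intro exI[of _ y] allI impI Henstock_Kurzweil_Integration.integral_combine
        continuous_on_UNIV_integrable_on_interval exp_decay_continuous_on[OF assms(1)]) auto
  ultimately show "((\<lambda>R. integral {x..R} g) \<longlongrightarrow> integral {x..y} g + tail_integral g y) at_top"
    by (rule Lim_transform_eventually)
qed

lemma has_real_derivative_tail_integral:
  assumes "exp_decay g a" "a < x"
  shows "(tail_integral g has_real_derivative - g x) (at x)"
proof -
  have g: "continuous_on UNIV g" using assms(1) by (rule exp_decay_continuous_on)
  have "((\<lambda>y. integral {a..y} g) has_real_derivative g x) (at x within {a..x+1})"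
    using g assms by (intro integral_has_real_derivative) (auto intro: continuous_on_subset)
  then have "((\<lambda>y. integral {a..y} g) has_real_derivative g x) (at x)"
    using at_within_Icc_at[of a x "x+1"] assms by simp
  then have "((\<lambda>y. tail_integral g a - integral {a..y} g) has_real_derivative - g x) (at x)"
    by (intro derivative_eq_intros) auto
  then show ?thesis
  proof (rule has_field_derivative_transform_within_open[where S="{a<..}"])
    fix y assume "y \<in> {a<..}"
    then show "tail_integral g a - integral {a..y} g = tail_integral g y"
      using tail_integral_split[OF assms(1), of a y] by simp
  qed (use assms in auto)
qed

lemma tail_integral_mono:
  assumes "exp_decay g a" "exp_decay G a" "a \<le> x" "\<And>t. t \<ge> x \<Longrightarrow> g t \<le> G t"
  shows "tail_integral g x \<le> tail_integral G x"
proof (rule tendsto_le[OF trivial_limit_at_top_linorder tail_integral_tendsto[OF assms(2,3)]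
      tail_integral_tendsto[OF assms(1,3)]])
  show "\<forall>\<^sub>F R in at_top. integral {x..R} g \<le> integral {x..R} G"
    unfolding eventually_at_top_linorder using assms(4)
    by (intro exI[of _ x] allI impI integral_le continuous_on_UNIV_integrable_on_interval
        exp_decay_continuous_on[OF assms(1)] exp_decay_continuous_on[OF assms(2)]) auto
qed

lemma abs_tail_integral_le:
  assumes "exp_decay g a" "exp_decay G a" "a \<le> x" "\<And>t. t \<ge> x \<Longrightarrow> \<bar>g t\<bar> \<le> G t"
  shows "\<bar>tail_integral g x\<bar> \<le> tail_integral G x"
proof (rule tendsto_le[OF trivial_limit_at_top_linorder tail_integral_tendsto[OF assms(2,3)]
      tendsto_rabs[OF tail_integral_tendsto[OF assms(1,3)]]])
  show "\<forall>\<^sub>F R in at_top. \<bar>integral {x..R} g\<bar> \<le> integral {x..R} G"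
    unfolding eventually_at_top_linorder using assms(4)
    by (intro exI[of _ x] allI impI integral_norm_bound_integral[where 'a=real, simplified]
        continuous_on_UNIV_integrable_on_interval
        exp_decay_continuous_on[OF assms(1)] exp_decay_continuous_on[OF assms(2)]) auto
qed

lemma tail_integral_cmult:
  assumes "exp_decay f a" "a \<le> x"
  shows "tail_integral (\<lambda>t. C * f t) x = C * tail_integral f x"
  by (rule tail_integral_eqI[OF exp_decay_cmult[OF assms(1)] assms(2)])
     (simp add: tendsto_mult_left tail_integral_tendsto[OF assms])

lemma tail_integral_add:
  assumes "exp_decay f a" "exp_decay g a" "a \<le> x"
  shows "tail_integral (\<lambda>t. f t + g t) x = tail_integral f x + tail_integral g x"
proof (rule tail_integral_eqI[OF exp_decay_add[OF assms(1,2)] assms(3)])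
  have "integral {x..R} (\<lambda>t. f t + g t) = integral {x..R} f + integral {x..R} g" for R
    by (intro integral_add continuous_on_UNIV_integrable_on_interval
        exp_decay_continuous_on[OF assms(1)] exp_decay_continuous_on[OF assms(2)])
  then show "((\<lambda>R. integral {x..R} (\<lambda>t. f t + g t)) \<longlongrightarrow> tail_integral f x + tail_integral g x) at_top"
    by (simp add: tendsto_add tail_integral_tendsto[OF assms(1,3)] tail_integral_tendsto[OF assms(2,3)])
qed

lemma tail_integral_diff:
  assumes "exp_decay f a" "exp_decay g a" "a \<le> x"
  shows "tail_integral (\<lambda>t. f t - g t) x = tail_integral f x - tail_integral g x"
  using tail_integral_add[OF assms(1) exp_decay_cmult[OF assms(2)] assms(3), of "-1"]
    tail_integral_cmult[OF assms(2,3), of "-1"]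
  by simp

lemma tail_integral_nonneg:
  assumes "exp_decay g a" "a \<le> x" "\<And>t. t \<ge> x \<Longrightarrow> g t \<ge> 0"
  shows "tail_integral g x \<ge> 0"
  using tail_integral_mono[OF exp_decay_zero assms(1,2)] assms(3)
    tail_integral_cmult[OF assms(1,2), of 0]
  by simp

lemma tail_integral_antimono:
  assumes "exp_decay g a" "a \<le> x" "x \<le> y" "\<And>t. t \<ge> x \<Longrightarrow> g t \<ge> 0"
  shows "tail_integral g y \<le> tail_integral g x"
proof -
  have "integral {x..y} g \<ge> 0"
    using assms(4) by (intro integral_nonneg continuous_on_UNIV_integrable_on_interval
        exp_decay_continuous_on[OF assms(1)]) auto
  then show ?thesis using tail_integral_split[OF assms(1-3)] by simp
qed

lemma tail_integral_exp:
  assumes "\<kappa> > 0"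
  shows "tail_integral (\<lambda>t. exp (-\<kappa>*t)) x = exp (-\<kappa>*x) / \<kappa>"
proof (rule tail_integral_eqI[OF exp_decay_exp[OF assms] order_refl])
  have "((\<lambda>R. (exp (-\<kappa>*x) - exp (-\<kappa>*R)) / \<kappa>) \<longlongrightarrow> (exp (-\<kappa>*x) - 0) / \<kappa>) at_top"
    using assms by (intro tendsto_intros tendsto_exp_neg_mult_at_top) auto
  moreover have "\<forall>\<^sub>F R in at_top. (exp (-\<kappa>*x) - exp (-\<kappa>*R)) / \<kappa> = integral {x..R} (\<lambda>t. exp (-\<kappa>*t))"
    unfolding eventually_at_top_linorder
    by (intro exI[of _ x] allI impI integral_exp_neg_mult[OF assms, symmetric])
  ultimately have "((\<lambda>R. integral {x..R} (\<lambda>t. exp (-\<kappa>*t))) \<longlongrightarrow> (exp (-\<kappa>*x) - 0) / \<kappa>) at_top"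
    by (rule Lim_transform_eventually)
  then show "((\<lambda>R. integral {x..R} (\<lambda>t. exp (-\<kappa>*t))) \<longlongrightarrow> exp (-\<kappa>*x) / \<kappa>) at_top"
    by simp
qed

lemma tail_integral_cmult_exp:
  assumes "\<kappa> > 0"
  shows "tail_integral (\<lambda>t. C * exp (-\<kappa>*t)) x = C * exp (-\<kappa>*x) / \<kappa>"
  using tail_integral_cmult[OF exp_decay_exp[OF assms] order_refl] tail_integral_exp[OF assms] by simp

lemma abs_tail_integral_le_exp:
  assumes "exp_decay g a" "a \<le> x" "\<kappa> > 0" "\<And>t. t \<ge> x \<Longrightarrow> \<bar>g t\<bar> \<le> C * exp (-\<kappa>*t)"
  shows "\<bar>tail_integral g x\<bar> \<le> C * exp (-\<kappa>*x) / \<kappa>"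
  using abs_tail_integral_le[OF exp_decay_mono[OF assms(1,2)]
      exp_decay_cmult[OF exp_decay_exp[OF assms(3)]] order_refl assms(4)]
    tail_integral_cmult_exp[OF assms(3)]
  by simp

lemma tail_integral_tendsto_0:
  assumes "exp_decay g a"
  shows "(tail_integral g \<longlongrightarrow> 0) at_top"
proof -
  obtain B k where "k > 0" and bound: "\<And>t. t \<ge> a \<Longrightarrow> \<bar>g t\<bar> \<le> B * exp (-k*t)"
    using exp_decayE[OF assms] by blast
  have "\<bar>tail_integral g x\<bar> \<le> B * exp (-k*x) / k" if "x \<ge> a" for x
    using that by (intro abs_tail_integral_le_exp[OF assms _ \<open>k > 0\<close>] bound) auto
  then have "\<forall>\<^sub>F x in at_top. norm (tail_integral g x) \<le> B * exp (-k*x) / k"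
    unfolding eventually_at_top_linorder by auto
  moreover have "((\<lambda>x. B * exp (-k*x) / k) \<longlongrightarrow> B * 0 / k) at_top"
    using \<open>k > 0\<close> by (intro tendsto_intros tendsto_exp_neg_mult_at_top) auto
  ultimately show ?thesis by (simp add: Lim_null_comparison)
qed

lemma tail_integral_unique:
  assumes "exp_decay g a" "\<And>x. x > a \<Longrightarrow> (S has_real_derivative - g x) (at x)"
    "(S \<longlongrightarrow> 0) at_top" "x > a"
  shows "S x = tail_integral g x"
proof -
  define D where "D = (\<lambda>y. S y - tail_integral g y)"
  have "(D has_real_derivative 0) (at y)" if "y > a" for y
    unfolding D_def using assms(2)[OF that] has_real_derivative_tail_integral[OF assms(1) that]
    by (auto intro!: derivative_eq_intros)
  then have const: "D y = D x" if "y > x" for y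
    by (intro DERIV_isconst3[of a "y+1"]) (use that assms(4) in auto)
  have "(D \<longlongrightarrow> 0 - 0) at_top"
    unfolding D_def by (intro tendsto_diff assms(3) tail_integral_tendsto_0[OF assms(1)])
  moreover have "(D \<longlongrightarrow> D x) at_top"
    by (rule tendsto_eventually) (auto simp: eventually_at_top_linorder intro!: exI[of _ "x+1"] const)
  ultimately have "D x = 0" using tendsto_unique trivial_limit_at_top_linorder by fastforce
  then show ?thesis unfolding D_def by simp
qed

lemma gronwall_tail_integral:
  fixes \<phi> h :: "real \<Rightarrow> real"
  assumes h: "\<And>a. exp_decay h a" "\<And>t. h t \<ge> 0"
    and \<phi>: "continuous_on UNIV \<phi>" "\<And>t. \<phi> t \<ge> 0" "\<And>a. \<exists>M. \<forall>t\<ge>a. \<phi> t \<le> M"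
    and "A \<ge> 0" "\<gamma> \<ge> 0"
    and ineq: "\<And>x. \<phi> x \<le> A + \<gamma> * tail_integral (\<lambda>t. h t * \<phi> t) x"
  shows "\<phi> x \<le> A * exp (\<gamma> * tail_integral h x)"
proof -
  define a where "a = x - 1"
  obtain M where M: "\<And>t. t \<ge> a \<Longrightarrow> \<phi> t \<le> M" using \<phi>(3) by blast
  have "exp_decay (\<lambda>t. \<phi> t * h t) a"
    by (rule exp_decay_mult_bounded[OF h(1) \<phi>(1)]) (use M \<phi>(2) in auto)
  then have h\<phi>: "exp_decay (\<lambda>t. h t * \<phi> t) a" by (simp add: mult.commute)
  define \<Psi> where "\<Psi> = (\<lambda>y. A + \<gamma> * tail_integral (\<lambda>t. h t * \<phi> t) y)"
  define F where "F = (\<lambda>y. \<Psi> y * exp (- \<gamma> * tail_integral h y))"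
  have "(F has_real_derivative \<gamma> * h y * (\<Psi> y - \<phi> y) * exp (- \<gamma> * tail_integral h y)) (at y)"
    if "y > a" for y
    unfolding F_def \<Psi>_def
    by (rule derivative_eq_intros has_real_derivative_tail_integral[OF h\<phi> that]
        has_real_derivative_tail_integral[OF h(1) that] refl | simp)+ (simp add: algebra_simps)
  moreover have "\<gamma> * h y * (\<Psi> y - \<phi> y) * exp (- \<gamma> * tail_integral h y) \<ge> 0" for y
    using ineq[of y] assms(7) h(2)[of y] unfolding \<Psi>_def by simp
  ultimately have mono: "F x \<le> F y" if "y \<ge> x" for y
    by (intro DERIV_nonneg_imp_nondecreasing[OF that]) (force simp: a_def)
  have "(F \<longlongrightarrow> (A + \<gamma> * 0) * exp (- \<gamma> * 0)) at_top"
    unfolding F_def \<Psi>_def by (intro tendsto_intros tail_integral_tendsto_0[OF h\<phi>] tail_integral_tendsto_0[OF h(1)])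
  then have "F x \<le> A"
    by (intro tendsto_le[OF trivial_limit_at_top_linorder, of F, OF _ tendsto_const])
       (auto simp: eventually_at_top_linorder intro!: exI[of _ x] mono)
  then show ?thesis
    using ineq[of x] unfolding F_def \<Psi>_def by (simp add: exp_minus field_simps)
qed

lemma tail_integral_cong:
  assumes "exp_decay f a" "exp_decay g a" "a \<le> x" "\<And>t. t \<ge> x \<Longrightarrow> f t = g t"
  shows "tail_integral f x = tail_integral g x"
proof (rule order_antisym)
  show "tail_integral f x \<le> tail_integral g x" by (rule tail_integral_mono[OF assms(1-3)]) (simp add: assms(4))
  show "tail_integral g x \<le> tail_integral f x" by (rule tail_integral_mono[OF assms(2,1,3)]) (simp add: assms(4))
qed

lemma tail_integral_pos:
  assumes "exp_decay g a" "a < x" "x < y" "\<And>t. t \<ge> x \<Longrightarrow> g t \<ge> 0" "g y \<noteq> 0"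
  shows "tail_integral g x > 0"
proof -
  have nonneg: "tail_integral g z \<ge> 0" if "z \<ge> x" for z
    using assms(2,4) that by (intro tail_integral_nonneg[OF assms(1)]) auto
  have "tail_integral g x \<noteq> 0"
  proof
    assume zero: "tail_integral g x = 0"
    have vanish: "tail_integral g z = 0" if "z \<in> {x<..}" for z
    proof -
      have "tail_integral g z \<le> tail_integral g x"
        using that assms(2,4) by (intro tail_integral_antimono[OF assms(1)]) auto
      moreover have "tail_integral g z \<ge> 0" using nonneg that by simp
      ultimately show ?thesis using zero by linarith
    qed
    have "(tail_integral g has_real_derivative 0) (at y)"
    proof (rule has_field_derivative_transform_within_open[of "\<lambda>_. 0" 0 y "{x<..}"])
      show "y \<in> {x<..}" using assms(3) by simp
      show "\<And>z. z \<in> {x<..} \<Longrightarrow> 0 = tail_integral g z" using vanish by simp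
    qed auto
    moreover have "(tail_integral g has_real_derivative - g y) (at y)"
      using assms(2,3) by (intro has_real_derivative_tail_integral[OF assms(1)]) auto
    ultimately have "- g y = 0" by (rule DERIV_unique[rotated])
    then show False using assms(5) by simp
  qed
  then show ?thesis using nonneg[of x] by simp
qed

lemma tail_integral_tendsto_weighted:
  assumes "\<kappa> > 0" "exp_decay h0 a" "a < \<zeta>" "(y \<longlongrightarrow> \<zeta>) F"
    and decay: "\<forall>\<^sub>F s in F. exp_decay (h s) a"
    and close: "\<And>\<epsilon>. \<epsilon> > 0 \<Longrightarrow> \<forall>\<^sub>F s in F. \<forall>t\<ge>a. \<bar>h s t - h0 t\<bar> \<le> \<epsilon> * exp (-\<kappa>*t)"
  shows "((\<lambda>s. tail_integral (h s) (y s)) \<longlongrightarrow> tail_integral h0 \<zeta>) F"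
proof (rule tendstoI)
  fix e :: real assume "e > 0"
  define \<epsilon> where "\<epsilon> = e * \<kappa> / (4 * exp (-\<kappa>*a))"
  have "\<epsilon> > 0" unfolding \<epsilon>_def using \<open>e > 0\<close> assms(1) by simp
  have "isCont (tail_integral h0) \<zeta>"
    using has_real_derivative_tail_integral[OF assms(2,3)] by (rule DERIV_isCont)
  then have "\<forall>\<^sub>F s in F. dist (tail_integral h0 (y s)) (tail_integral h0 \<zeta>) < e/2"
    using \<open>e > 0\<close> by (intro tendstoD isCont_tendsto_compose[OF _ assms(4)]) auto
  moreover have "\<forall>\<^sub>F s in F. y s > a" using order_tendstoD(1)[OF assms(4,3)] .
  ultimately show "\<forall>\<^sub>F s in F. dist (tail_integral (h s) (y s)) (tail_integral h0 \<zeta>) < e"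
    using close[OF \<open>\<epsilon> > 0\<close>] decay
  proof eventually_elim
    case (elim s)
    have "\<bar>tail_integral (h s) (y s) - tail_integral h0 (y s)\<bar>
        = \<bar>tail_integral (\<lambda>t. h s t - h0 t) (y s)\<bar>"
      using elim by (simp add: tail_integral_diff[OF _ assms(2)])
    also have "\<dots> \<le> \<epsilon> * exp (-\<kappa>*y s) / \<kappa>"
      using elim by (intro abs_tail_integral_le_exp[OF exp_decay_diff[OF _ assms(2)] _ assms(1)]) auto
    also have "\<dots> \<le> \<epsilon> * exp (-\<kappa>*a) / \<kappa>"
      using elim \<open>\<epsilon> > 0\<close> assms(1) by (intro divide_right_mono mult_left_mono) auto
    also have "\<dots> = e/4" unfolding \<epsilon>_def using assms(1) by simp
    finally show ?case
      using elim(1) \<open>e > 0\<close> unfolding dist_real_def by linarith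
  qed
qed

section \<open>The potential and a single Jost solution\<close>

definition potential :: "real \<Rightarrow> real \<Rightarrow> real" where
  "potential p t = (2*p+1)*(p+1) * (1 / cosh (p*t))\<^sup>2"

definition potential_tail :: "real \<Rightarrow> real \<Rightarrow> real" where
  "potential_tail p x = (2*p+1)*(p+1) / p * (1 - tanh (p*x))"

text \<open>\<open>\<integral>\<^sub>\<real> h\<close>, the supremum of \<open>potential_tail\<close>.\<close>
definition potential_mass :: "real \<Rightarrow> real" where
  "potential_mass p = 2 * ((2*p+1)*(p+1)) / p"

lemma potential_nonneg: "p > 0 \<Longrightarrow> potential p t \<ge> 0"
  unfolding potential_def by simp

lemma potential_mass_nonneg: "p > 0 \<Longrightarrow> potential_mass p \<ge> 0"
  unfolding potential_mass_def by simp

lemma continuous_on_potential: "continuous_on UNIV (potential p)"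
  unfolding potential_def
  by (intro continuous_intros) (auto simp: cosh_real_pos[THEN less_imp_neq, symmetric])

lemma sech_squared_le: "(1 / cosh (y::real))\<^sup>2 \<le> 4 * exp (-2*y)"
proof -
  have "exp y / 2 \<le> cosh y" by (simp add: cosh_field_def)
  then have "(exp y / 2)\<^sup>2 \<le> (cosh y)\<^sup>2" by (intro power_mono) auto
  then have "1 / (cosh y)\<^sup>2 \<le> 1 / (exp y / 2)\<^sup>2" by (intro divide_left_mono) auto
  also have "1 / (exp y / 2)\<^sup>2 = 4 * exp (-2*y)"
    by (simp add: power2_eq_square exp_minus field_simps flip: exp_add)
  finally show ?thesis by (simp add: power_divide)
qed

lemma exp_decay_potential:
  assumes "p > 0"
  shows "exp_decay (potential p) a"
proof (rule exp_decayI[where \<kappa>="2*p" and B="4 * ((2*p+1)*(p+1))"])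
  fix t
  have "(1 / cosh (p*t))\<^sup>2 \<le> 4 * exp (-(2*p)*t)"
    using sech_squared_le[of "p*t"] by (simp add: mult.assoc)
  then have "potential p t \<le> (2*p+1)*(p+1) * (4 * exp (-(2*p)*t))"
    unfolding potential_def using assms by (intro mult_left_mono) auto
  then show "\<bar>potential p t\<bar> \<le> 4 * ((2*p+1)*(p+1)) * exp (-(2*p)*t)"
    using potential_nonneg[OF assms, of t] by simp
qed (use assms continuous_on_potential in auto)

lemma exp_decay_potential_mult:
  assumes "p > 0" "continuous_on UNIV f" "\<And>t. t \<ge> a \<Longrightarrow> \<bar>f t\<bar> \<le> M"
  shows "exp_decay (\<lambda>t. potential p t * f t) a"
  using exp_decay_mult_bounded[OF exp_decay_potential[OF assms(1)] assms(2,3)]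
  by (simp add: mult.commute)

lemma has_real_derivative_potential_tail:
  "p > 0 \<Longrightarrow> (potential_tail p has_real_derivative - potential p x) (at x)"
  unfolding potential_tail_def potential_def
  apply (rule derivative_eq_intros refl | simp)+
  apply (simp add: tanh_def power_divide field_simps)
  using cosh_square_eq[of "p*x"] by (simp add: algebra_simps)

lemma potential_tail_tendsto_0: "p > 0 \<Longrightarrow> (potential_tail p \<longlongrightarrow> 0) at_top"
proof -
  assume p: "p > 0"
  have "((\<lambda>x. tanh (p*x)) \<longlongrightarrow> 1) at_top"
    by (rule filterlim_compose[OF tanh_real_at_top
          filterlim_tendsto_pos_mult_at_top[OF tendsto_const p filterlim_ident]])
  then have "((\<lambda>x. (2*p+1)*(p+1) / p * (1 - tanh (p*x))) \<longlongrightarrow> (2*p+1)*(p+1) / p * (1 - 1)) at_top"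
    by (intro tendsto_intros)
  then show ?thesis unfolding potential_tail_def by simp
qed

lemma tail_integral_potential: "p > 0 \<Longrightarrow> tail_integral (potential p) x = potential_tail p x"
  by (rule tail_integral_unique[OF exp_decay_potential _ potential_tail_tendsto_0, of p "x-1", symmetric])
     (auto intro: has_real_derivative_potential_tail)

lemma potential_tail_le_mass: "p > 0 \<Longrightarrow> potential_tail p x \<le> potential_mass p"
proof -
  assume p: "p > 0"
  have "1 - tanh (p*x) \<le> 2" using tanh_real_gt_neg1[of "p*x"] by simp
  then have "(2*p+1)*(p+1) / p * (1 - tanh (p*x)) \<le> (2*p+1)*(p+1) / p * 2"
    using p by (intro mult_left_mono) auto
  then show ?thesis unfolding potential_tail_def potential_mass_def by simp
qed

lemma abs_tail_integral_potential_mult_le: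
  assumes "p > 0" "continuous_on UNIV f" "\<And>t. t \<ge> x \<Longrightarrow> \<bar>f t\<bar> \<le> M"
  shows "\<bar>tail_integral (\<lambda>t. potential p t * f t) x\<bar> \<le> M * potential_mass p"
proof -
  have "\<bar>tail_integral (\<lambda>t. potential p t * f t) x\<bar> \<le> tail_integral (\<lambda>t. M * potential p t) x"
  proof (rule abs_tail_integral_le[OF exp_decay_potential_mult[OF assms]
        exp_decay_cmult[OF exp_decay_potential[OF assms(1)]] order_refl])
    fix t assume "t \<ge> x"
    then have "\<bar>f t\<bar> * potential p t \<le> M * potential p t"
      using assms(3) potential_nonneg[OF assms(1), of t] by (intro mult_right_mono)
    then show "\<bar>potential p t * f t\<bar> \<le> M * potential p t"
      using potential_nonneg[OF assms(1), of t] by (simp add: abs_mult mult.commute)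
  qed
  also have "\<dots> = M * potential_tail p x"
    using tail_integral_cmult[OF exp_decay_potential[OF assms(1)] order_refl]
      tail_integral_potential[OF assms(1)] by simp
  also have "\<dots> \<le> M * potential_mass p"
    using assms(3)[of x] potential_tail_le_mass[OF assms(1), of x] by (intro mult_left_mono) auto
  finally show ?thesis .
qed

lemma deriv_limit_zero_if_bounded:
  fixes f f' :: "real \<Rightarrow> real"
  assumes deriv: "\<And>x. (f has_real_derivative f' x) (at x)" and lim: "(f' \<longlongrightarrow> l) at_top"
    and bounded: "\<And>t. t \<ge> a \<Longrightarrow> \<bar>f t\<bar> \<le> M"
  shows "l = 0"
proof (rule ccontr)
  assume "l \<noteq> 0"
  then obtain X where X: "X \<ge> a" "\<And>y. y \<ge> X \<Longrightarrow> \<bar>f' y - l\<bar> < \<bar>l\<bar>/2"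
    using tendstoD[OF lim, of "\<bar>l\<bar>/2"]
    by (auto simp: eventually_at_top_linorder dist_real_def) (metis nle_le order_trans)
  have M: "M \<ge> 0" using bounded[of a] by simp
  define y where "y = X + 4*M/\<bar>l\<bar> + 1"
  have "4*M/\<bar>l\<bar> \<ge> 0" using M by simp
  then have Xy: "X < y" unfolding y_def by linarith
  obtain z where z: "X < z" "f y - f X = (y - X) * f' z"
    using MVT2[OF Xy, of f f'] deriv by blast
  have "\<bar>f' z\<bar> > \<bar>l\<bar>/2" using X(2)[of z] z(1) by linarith
  then have "\<bar>f y - f X\<bar> \<ge> (y - X) * (\<bar>l\<bar>/2)"
    using z Xy by (simp add: abs_mult mult_left_mono less_imp_le)
  moreover have "(y - X) * (\<bar>l\<bar>/2) = 2*M + \<bar>l\<bar>/2" unfolding y_def using \<open>l \<noteq> 0\<close> by (simp add: field_simps)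
  moreover have "\<bar>f y - f X\<bar> \<le> 2*M" using bounded[of y] bounded[of X] X(1) Xy by simp
  moreover have "\<bar>l\<bar> > 0" using \<open>l \<noteq> 0\<close> by simp
  ultimately show False by linarith
qed

definition decay_rate :: "real \<Rightarrow> real" where
  "decay_rate lam = sqrt (1 - lam)"

text \<open>For a solution \<open>v\<close> at spectral parameter \<open>\<lambda>\<close> with \<open>k = \<surd>(1 - \<lambda>)\<close>, the factor
  \<open>u = e\<^sup>k\<^sup>x v\<close> solves \<open>u'' = 2 k u' - h u\<close> with \<open>u \<rightarrow> 1\<close>, where \<open>h\<close> is the potential;
  \<open>jost_remainder\<close> is \<open>\<integral>\<^sub>x\<^sup>\<infinity> h u\<close>.\<close>
definition jost_factor :: "(real \<Rightarrow> real) \<Rightarrow> real \<Rightarrow> real \<Rightarrow> real" where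
  "jost_factor v lam x = v x * exp (decay_rate lam * x)"

definition jost_factor_deriv :: "(real \<Rightarrow> real) \<Rightarrow> real \<Rightarrow> real \<Rightarrow> real" where
  "jost_factor_deriv v lam x = (deriv v x + decay_rate lam * v x) * exp (decay_rate lam * x)"

definition jost_remainder :: "real \<Rightarrow> (real \<Rightarrow> real) \<Rightarrow> real \<Rightarrow> real \<Rightarrow> real" where
  "jost_remainder p v lam x = tail_integral (\<lambda>t. potential p t * jost_factor v lam t) x"

text \<open>Gronwall's bound for \<open>|u|\<close>: the Volterra kernel has mass \<open>1/(2k)\<close> and \<open>\<integral> h \<le> potential_mass p\<close>.\<close>
definition jost_bound :: "real \<Rightarrow> real \<Rightarrow> real" where
  "jost_bound p k = exp (potential_mass p / (2 * k))"

lemma jost_bound_antimono: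
  "p > 0 \<Longrightarrow> 0 < k \<Longrightarrow> k \<le> k' \<Longrightarrow> jost_bound p k' \<le> jost_bound p k"
  unfolding jost_bound_def using potential_mass_nonneg[of p]
  by (simp add: divide_left_mono)

locale jost_solution =
  fixes p lam :: real and V :: "real \<Rightarrow> real"
  assumes p: "p > 0" and lam: "lam < 1" and sol: "is_sol p lam V"
begin

abbreviation "k \<equiv> decay_rate lam"
abbreviation "U \<equiv> jost_factor V lam"
abbreviation "U' \<equiv> jost_factor_deriv V lam"
abbreviation "\<Phi> \<equiv> jost_remainder p V lam"
abbreviation "M \<equiv> jost_bound p k"

lemma decay_rate_pos: "k > 0"
  unfolding decay_rate_def using lam by simp

lemma V_has_deriv: "(V has_real_derivative deriv V x) (at x)"
  and deriv_V_has_deriv: "(deriv V has_real_derivative ((1 - lam) * V x - potential p x * V x)) (at x)"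
proof -
  obtain v' where v: "\<And>x. (V has_real_derivative v' x) (at x)"
    "\<And>x. (v' has_real_derivative
       ((1 - lam) * V x - (2 * p + 1) * (p + 1) * (1 / cosh (p * x))\<^sup>2 * V x)) (at x)"
    using sol unfolding is_sol_def by blast
  have "deriv V = v'" using v(1) DERIV_imp_deriv by blast
  then show "(V has_real_derivative deriv V x) (at x)"
    "(deriv V has_real_derivative ((1 - lam) * V x - potential p x * V x)) (at x)"
    using v unfolding potential_def by (simp_all add: mult.assoc)
qed

lemma continuous_on_V: "continuous_on UNIV V"
  using V_has_deriv by (meson DERIV_isCont continuous_at_imp_continuous_on)

lemma continuous_on_deriv_V: "continuous_on UNIV (deriv V)"
  using deriv_V_has_deriv by (meson DERIV_isCont continuous_at_imp_continuous_on)

lemma U_has_deriv: "(U has_real_derivative U' x) (at x)"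
  unfolding jost_factor_def jost_factor_deriv_def
  by (rule derivative_eq_intros V_has_deriv refl | simp)+ (simp add: algebra_simps)

lemma U'_has_deriv: "(U' has_real_derivative (2*k*U' x - potential p x * U x)) (at x)"
proof -
  have V'': "(deriv V has_real_derivative (k*k * V y - potential p y * V y)) (at y)" for y
    using deriv_V_has_deriv[of y] lam unfolding decay_rate_def by simp
  show ?thesis
    unfolding jost_factor_def jost_factor_deriv_def
    by (rule derivative_eq_intros V_has_deriv V'' refl | simp)+ (simp add: algebra_simps)
qed

lemma continuous_on_U: "continuous_on UNIV U"
  using U_has_deriv by (meson DERIV_isCont continuous_at_imp_continuous_on)

lemma U_tendsto_1: "(U \<longlongrightarrow> 1) at_top"
  using sol unfolding is_sol_def jost_factor_def decay_rate_def by blast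

lemma U_bounded: "\<exists>B. \<forall>t\<ge>a. \<bar>U t\<bar> \<le> B"
proof -
  obtain R where R: "\<And>t. t \<ge> R \<Longrightarrow> \<bar>U t - 1\<bar> < 1"
    using tendstoD[OF U_tendsto_1, of 1] by (auto simp: eventually_at_top_linorder dist_real_def)
  have "compact ((\<lambda>t. \<bar>U t\<bar>) ` {a..R})"
    using continuous_on_U by (intro compact_continuous_image) (auto intro!: continuous_intros intro: continuous_on_subset)
  then obtain B where B: "\<And>t. t \<in> {a..R} \<Longrightarrow> \<bar>U t\<bar> \<le> B"
    using compact_imp_bounded[THEN bounded_real[THEN iffD1]] by fastforce
  have "\<bar>U t\<bar> \<le> max B 2" if "t \<ge> a" for t
    using B[of t] R[of t] that by (cases "t \<le> R") auto
  then show ?thesis by blast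
qed

lemma exp_decay_potential_U: "exp_decay (\<lambda>t. potential p t * U t) a"
  using U_bounded[of a] exp_decay_potential_mult[OF p continuous_on_U] by blast

lemma exp_decay_potential_abs_U: "exp_decay (\<lambda>t. potential p t * \<bar>U t\<bar>) a"
proof -
  obtain B where "\<forall>t\<ge>a. \<bar>U t\<bar> \<le> B" using U_bounded by blast
  then show ?thesis
    using continuous_on_U by (intro exp_decay_potential_mult[OF p]) (auto intro: continuous_intros)
qed

lemma Phi_has_deriv: "(\<Phi> has_real_derivative - (potential p x * U x)) (at x)"
  unfolding jost_remainder_def by (rule has_real_derivative_tail_integral[OF exp_decay_potential_U[of "x-1"]]) simp

lemma continuous_on_Phi: "continuous_on UNIV \<Phi>"
  using Phi_has_deriv by (meson DERIV_isCont continuous_at_imp_continuous_on)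

lemma Phi_tendsto_0: "(\<Phi> \<longlongrightarrow> 0) at_top"
  unfolding jost_remainder_def by (rule tail_integral_tendsto_0[OF exp_decay_potential_U])

text \<open>First integral of \<open>u'' = 2 k u' - h u\<close>: the integration constant is forced by \<open>u \<rightarrow> 1\<close>,
  since a nonzero limit of \<open>u'\<close> would make \<open>u\<close> unbounded.\<close>
lemma U'_eq: "U' x = 2*k*(U x - 1) + \<Phi> x"
proof -
  define G where "G = (\<lambda>y. U y - U' y * (1 / (2*k)) + \<Phi> y * (1 / (2*k)))"
  have "(G has_real_derivative 0) (at y)" for y
    unfolding G_def
    by (rule derivative_eq_intros U_has_deriv U'_has_deriv Phi_has_deriv refl | simp)+
       (use decay_rate_pos in \<open>simp add: field_simps\<close>)
  then obtain C where "\<And>y. G y = C" using DERIV_isconst_all by blast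
  then have U'_C: "U' y = 2*k*(U y - C) + \<Phi> y" for y
    using decay_rate_pos unfolding G_def by (simp add: field_simps)
  have "(U' \<longlongrightarrow> 2*k*(1 - C) + 0) at_top"
    unfolding U'_C by (intro tendsto_intros U_tendsto_1 Phi_tendsto_0)
  moreover obtain B where "\<forall>t\<ge>0. \<bar>U t\<bar> \<le> B" using U_bounded by blast
  ultimately have "2*k*(1 - C) + 0 = 0"
    by (intro deriv_limit_zero_if_bounded[OF U_has_deriv, where a=0 and M=B]) auto
  then show ?thesis using decay_rate_pos U'_C[of x] by simp
qed

lemma exp_decay_weighted_Phi: "exp_decay (\<lambda>t. exp (-(2*k)*t) * \<Phi> t) a"
proof -
  obtain B where B: "\<And>t. t \<ge> a \<Longrightarrow> \<bar>U t\<bar> \<le> B" using U_bounded by blast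
  have "\<bar>\<Phi> t\<bar> \<le> B * potential_mass p" if "t \<ge> a" for t
    unfolding jost_remainder_def using B that by (intro abs_tail_integral_potential_mult_le[OF p continuous_on_U]) auto
  then have "exp_decay (\<lambda>t. \<Phi> t * exp (-(2*k)*t)) a"
    using decay_rate_pos by (intro exp_decay_mult_bounded[OF exp_decay_exp continuous_on_Phi]) auto
  then show ?thesis by (simp add: mult.commute)
qed

text \<open>Variation of constants for \<open>(U - 1)' = 2 k (U - 1) + \<Phi>\<close>, integrated from \<open>+\<infinity>\<close>.\<close>
lemma U_integral_equation: "U x - 1 = - tail_integral (\<lambda>t. exp (2*k*x) * (exp (-(2*k)*t) * \<Phi> t)) x"
proof -
  define S where "S = (\<lambda>y. - (exp (-(2*k)*y) * (U y - 1)))"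
  have "S x = tail_integral (\<lambda>t. exp (-(2*k)*t) * \<Phi> t) x"
  proof (rule tail_integral_unique[OF exp_decay_weighted_Phi[of "x - 1"]])
    show "(S has_real_derivative - (exp (-(2*k)*y) * \<Phi> y)) (at y)" for y
      unfolding S_def by (rule derivative_eq_intros U_has_deriv refl | simp)+ (simp add: U'_eq algebra_simps)
    have "(S \<longlongrightarrow> - (0 * (1 - 1))) at_top"
      unfolding S_def using decay_rate_pos by (intro tendsto_intros tendsto_exp_neg_mult_at_top U_tendsto_1) auto
    then show "(S \<longlongrightarrow> 0) at_top" by simp
  qed simp
  then have "U x - 1 = - exp (2*k*x) * tail_integral (\<lambda>t. exp (-(2*k)*t) * \<Phi> t) x"
    unfolding S_def by (simp add: exp_minus field_simps flip: exp_add)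
  then show ?thesis
    using tail_integral_cmult[OF exp_decay_weighted_Phi order_refl, where C="exp (2*k*x)"] by simp
qed

lemma abs_U_le_tail: "\<bar>U x\<bar> \<le> 1 + tail_integral (\<lambda>t. potential p t * \<bar>U t\<bar>) x / (2*k)"
proof -
  define \<Psi> where "\<Psi> = tail_integral (\<lambda>t. potential p t * \<bar>U t\<bar>)"
  have \<Phi>_le: "\<bar>\<Phi> t\<bar> \<le> \<Psi> x" if "t \<ge> x" for t
  proof -
    have "\<bar>\<Phi> t\<bar> \<le> \<Psi> t"
      unfolding jost_remainder_def \<Psi>_def
      by (rule abs_tail_integral_le[OF exp_decay_potential_U exp_decay_potential_abs_U order_refl])
         (use potential_nonneg[OF p] in \<open>auto simp: abs_mult\<close>)
    also have "\<Psi> t \<le> \<Psi> x"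
      unfolding \<Psi>_def using potential_nonneg[OF p] that
      by (intro tail_integral_antimono[OF exp_decay_potential_abs_U order_refl]) auto
    finally show ?thesis .
  qed
  have "\<bar>tail_integral (\<lambda>t. exp (2*k*x) * (exp (-(2*k)*t) * \<Phi> t)) x\<bar>
      \<le> tail_integral (\<lambda>t. (\<Psi> x * exp (2*k*x)) * exp (-(2*k)*t)) x"
  proof (rule abs_tail_integral_le[OF exp_decay_cmult[OF exp_decay_weighted_Phi]
        exp_decay_cmult[OF exp_decay_exp] order_refl])
    fix t assume "t \<ge> x"
    then have "\<bar>\<Phi> t\<bar> * (exp (2*k*x) * exp (-(2*k)*t)) \<le> \<Psi> x * (exp (2*k*x) * exp (-(2*k)*t))"
      using \<Phi>_le by (intro mult_right_mono) auto
    then show "\<bar>exp (2*k*x) * (exp (-(2*k)*t) * \<Phi> t)\<bar> \<le> \<Psi> x * exp (2*k*x) * exp (-(2*k)*t)"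
      by (simp add: abs_mult algebra_simps)
  qed (use decay_rate_pos in simp)
  also have "\<dots> = (\<Psi> x * exp (2*k*x)) * exp (-(2*k)*x) / (2*k)"
    by (rule tail_integral_cmult_exp) (use decay_rate_pos in simp)
  also have "\<dots> = \<Psi> x / (2*k)" by (simp flip: exp_add)
  finally show ?thesis using U_integral_equation[of x] unfolding \<Psi>_def by simp
qed

lemma abs_U_le: "\<bar>U x\<bar> \<le> M"
proof -
  have "\<bar>U x\<bar> \<le> 1 * exp (1/(2*k) * tail_integral (potential p) x)"
  proof (rule gronwall_tail_integral[OF exp_decay_potential[OF p] potential_nonneg[OF p]])
    show "continuous_on UNIV (\<lambda>t. \<bar>U t\<bar>)" using continuous_on_U by (intro continuous_intros)
    show "\<exists>B. \<forall>t\<ge>a. \<bar>U t\<bar> \<le> B" for a by (rule U_bounded)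
    show "\<bar>U y\<bar> \<le> 1 + 1 / (2 * k) * tail_integral (\<lambda>t. potential p t * \<bar>U t\<bar>) y" for y
      using abs_U_le_tail[of y] by simp
  qed (use decay_rate_pos in auto)
  also have "\<dots> \<le> M"
    unfolding jost_bound_def tail_integral_potential[OF p]
    using potential_tail_le_mass[OF p, of x] decay_rate_pos by (simp add: divide_right_mono)
  finally show ?thesis .
qed

lemma abs_Phi_le: "\<bar>\<Phi> x\<bar> \<le> M * potential_mass p"
  unfolding jost_remainder_def by (rule abs_tail_integral_potential_mult_le[OF p continuous_on_U abs_U_le])

lemma V_eq: "V x = exp (-k*x) * U x"
  unfolding jost_factor_def by (simp add: exp_minus field_simps)

lemma deriv_V_eq: "deriv V x = exp (-k*x) * (k * U x - 2*k + \<Phi> x)"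
proof -
  have "deriv V x = exp (-k*x) * U' x - k * V x"
    unfolding jost_factor_deriv_def by (simp add: exp_minus field_simps)
  then show ?thesis using U'_eq[of x] V_eq[of x] by (simp add: algebra_simps)
qed

lemma abs_V_le: "\<bar>V x\<bar> \<le> M * exp (-k*x)"
  using abs_U_le[of x] by (simp add: V_eq abs_mult mult.commute mult_left_mono)

lemma abs_deriv_V_le: "\<bar>deriv V x\<bar> \<le> (k * M + 2*k + M * potential_mass p) * exp (-k*x)"
proof -
  have "\<bar>k * U x - 2*k + \<Phi> x\<bar> \<le> k * \<bar>U x\<bar> + 2*k + \<bar>\<Phi> x\<bar>"
    using abs_triangle_ineq[of "k * U x - 2*k" "\<Phi> x"] abs_triangle_ineq4[of "k * U x" "2*k"] decay_rate_pos
    by (simp add: abs_mult)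
  also have "\<dots> \<le> k * M + 2*k + M * potential_mass p"
    using abs_U_le[of x] abs_Phi_le[of x] decay_rate_pos by (intro add_mono mult_left_mono) auto
  finally show ?thesis
    unfolding deriv_V_eq by (simp add: abs_mult mult.commute mult_left_mono)
qed

end

section \<open>Comparing two Jost solutions\<close>

lemma exp_weight_antimono_rate:
  fixes k m x t :: real
  assumes "0 < k" "k \<le> m" "x \<le> t"
  shows "exp (2*m*x) * exp (-(2*m)*t) \<le> exp (2*k*x) * exp (-(2*k)*t)"
proof -
  have "2*m*x + -(2*m)*t \<le> 2*k*x + -(2*k)*t"
    using mult_right_mono[OF assms(2), of "t - x"] assms(3) by (simp add: algebra_simps)
  then show ?thesis by (simp flip: exp_add)
qed

lemma exp_decay_exp_weight: "r > 0 \<Longrightarrow> exp_decay (\<lambda>t. exp (2*r*x) * exp (-(2*r)*t)) x"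
  by (intro exp_decay_cmult exp_decay_exp) simp

lemma tail_integral_exp_weight: "r > 0 \<Longrightarrow> tail_integral (\<lambda>t. exp (2*r*x) * exp (-(2*r)*t)) x = 1/(2*r)"
  using tail_integral_cmult_exp[of "2*r" "exp (2*r*x)" x] by (simp flip: exp_add)

lemma tail_integral_exp_weight_diff:
  fixes k m x :: real
  assumes "0 < k" "k \<le> m"
  shows "tail_integral (\<lambda>t. exp (2*k*x) * exp (-(2*k)*t) - exp (2*m*x) * exp (-(2*m)*t)) x
    = 1/(2*k) - 1/(2*m)"
  using tail_integral_diff[OF exp_decay_exp_weight exp_decay_exp_weight order_refl]
    tail_integral_exp_weight assms by simp

lemma tail_integral_abs_exp_weight_diff:
  fixes k m x :: real
  assumes "0 < k" "0 < m"
  shows "tail_integral (\<lambda>t. \<bar>exp (2*k*x) * exp (-(2*k)*t) - exp (2*m*x) * exp (-(2*m)*t)\<bar>) x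
    = \<bar>1/(2*k) - 1/(2*m)\<bar>"
proof -
  have *: "tail_integral (\<lambda>t. \<bar>exp (2*k*x) * exp (-(2*k)*t) - exp (2*m*x) * exp (-(2*m)*t)\<bar>) x
      = \<bar>1/(2*k) - 1/(2*m)\<bar>" if "0 < k" "k \<le> m" for k m :: real
  proof -
    note decay = exp_decay_exp_weight[of _ x]
    have "tail_integral (\<lambda>t. \<bar>exp (2*k*x) * exp (-(2*k)*t) - exp (2*m*x) * exp (-(2*m)*t)\<bar>) x
        = tail_integral (\<lambda>t. exp (2*k*x) * exp (-(2*k)*t) - exp (2*m*x) * exp (-(2*m)*t)) x"
      using exp_weight_antimono_rate[OF that]
      by (intro tail_integral_cong[OF exp_decay_abs[OF exp_decay_diff[OF decay decay]]
          exp_decay_diff[OF decay decay] order_refl]) (use that in auto)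
    also have "\<dots> = 1/(2*k) - 1/(2*m)" by (rule tail_integral_exp_weight_diff[OF that])
    finally show ?thesis using that by (simp add: frac_le)
  qed
  show ?thesis
    using *[of k m] *[of m k] assms by (cases "k \<le> m") (auto simp: abs_minus_commute)
qed

lemma tail_integral_exp_weight_bound:
  fixes k m x A B :: real
  assumes "0 < k" "0 < m"
  shows "tail_integral (\<lambda>t. A * (exp (2*k*x) * exp (-(2*k)*t))
      + B * \<bar>exp (2*k*x) * exp (-(2*k)*t) - exp (2*m*x) * exp (-(2*m)*t)\<bar>) x
    = A / (2*k) + B * \<bar>1/(2*k) - 1/(2*m)\<bar>"
proof -
  note dk = exp_decay_exp_weight[OF assms(1), of x] and dm = exp_decay_exp_weight[OF assms(2), of x]
  note dkm = exp_decay_abs[OF exp_decay_diff[OF dk dm]]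
  show ?thesis
    using tail_integral_add[OF exp_decay_cmult[OF dk] exp_decay_cmult[OF dkm] order_refl]
      tail_integral_cmult[OF dk order_refl] tail_integral_cmult[OF dkm order_refl]
      tail_integral_exp_weight[OF assms(1), of x] tail_integral_abs_exp_weight_diff[OF assms, of x]
    by simp
qed

context
  fixes p lam mu :: real and V W :: "real \<Rightarrow> real"
  assumes V: "jost_solution p lam V" and W: "jost_solution p mu W"
begin

private abbreviation "k \<equiv> decay_rate lam"
private abbreviation "m \<equiv> decay_rate mu"
private abbreviation "u \<equiv> jost_factor V lam"
private abbreviation "w \<equiv> jost_factor W mu"

private lemma p_pos: "p > 0"
  using V jost_solution.p by blast

private lemma exp_decay_potential_diff: "exp_decay (\<lambda>t. potential p t * \<bar>u t - w t\<bar>) a"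
  using jost_solution.abs_U_le[OF V] jost_solution.abs_U_le[OF W]
    jost_solution.continuous_on_U[OF V] jost_solution.continuous_on_U[OF W]
  by (intro exp_decay_potential_mult[OF p_pos, where M="jost_bound p k + jost_bound p m"] continuous_intros)
     (auto intro: order_trans[OF abs_triangle_ineq4] add_mono)

lemma abs_jost_remainder_diff_le:
  assumes "t \<ge> x"
  shows "\<bar>jost_remainder p V lam t - jost_remainder p W mu t\<bar>
    \<le> tail_integral (\<lambda>s. potential p s * \<bar>u s - w s\<bar>) x"
proof -
  have diff: "jost_remainder p V lam t - jost_remainder p W mu t
      = tail_integral (\<lambda>s. potential p s * u s - potential p s * w s) t"
    unfolding jost_remainder_def
    by (rule tail_integral_diff[OF jost_solution.exp_decay_potential_U[OF V]
          jost_solution.exp_decay_potential_U[OF W] order_refl, symmetric])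
  have "\<bar>jost_remainder p V lam t - jost_remainder p W mu t\<bar>
      \<le> tail_integral (\<lambda>s. potential p s * \<bar>u s - w s\<bar>) t"
    unfolding diff
    by (rule abs_tail_integral_le[OF exp_decay_diff[OF jost_solution.exp_decay_potential_U[OF V]
          jost_solution.exp_decay_potential_U[OF W]] exp_decay_potential_diff order_refl])
       (simp add: abs_mult potential_nonneg[OF p_pos] flip: right_diff_distrib)
  also have "\<dots> \<le> tail_integral (\<lambda>s. potential p s * \<bar>u s - w s\<bar>) x"
    by (rule tail_integral_antimono[OF exp_decay_potential_diff order_refl assms])
       (simp add: potential_nonneg[OF p_pos])
  finally show ?thesis .
qed

lemma abs_jost_factor_diff_le_tail:
  "\<bar>u x - w x\<bar> \<le> jost_bound p m * potential_mass p * \<bar>1/(2*k) - 1/(2*m)\<bar>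
     + 1/(2*k) * tail_integral (\<lambda>t. potential p t * \<bar>u t - w t\<bar>) x"
proof -
  define \<Delta> where "\<Delta> = tail_integral (\<lambda>t. potential p t * \<bar>u t - w t\<bar>) x"
  define B where "B = jost_bound p m * potential_mass p"
  define ek where "ek = (\<lambda>t. exp (2*k*x) * exp (-(2*k)*t))"
  define em where "em = (\<lambda>t. exp (2*m*x) * exp (-(2*m)*t))"
  define f1 where "f1 = (\<lambda>t. exp (2*k*x) * (exp (-(2*k)*t) * jost_remainder p V lam t))"
  define f2 where "f2 = (\<lambda>t. exp (2*m*x) * (exp (-(2*m)*t) * jost_remainder p W mu t))"
  have kpos: "k > 0" and mpos: "m > 0"
    using jost_solution.decay_rate_pos[OF V] jost_solution.decay_rate_pos[OF W] by auto
  have f1: "exp_decay f1 x" and f2: "exp_decay f2 x"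
    unfolding f1_def f2_def
    by (intro exp_decay_cmult jost_solution.exp_decay_weighted_Phi[OF V]
        jost_solution.exp_decay_weighted_Phi[OF W])+
  have ek: "exp_decay ek x" unfolding ek_def by (rule exp_decay_exp_weight[OF kpos])
  have E: "exp_decay (\<lambda>t. \<bar>ek t - em t\<bar>) x"
    unfolding ek_def em_def
    by (rule exp_decay_abs[OF exp_decay_diff[OF exp_decay_exp_weight[OF kpos] exp_decay_exp_weight[OF mpos]]])
  have "u x - w x = - tail_integral (\<lambda>t. f1 t - f2 t) x"
    using jost_solution.U_integral_equation[OF V, of x] jost_solution.U_integral_equation[OF W, of x]
      tail_integral_diff[OF f1 f2 order_refl]
    unfolding f1_def f2_def by simp
  then have "\<bar>u x - w x\<bar> = \<bar>tail_integral (\<lambda>t. f1 t - f2 t) x\<bar>" by simp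
  also have "\<dots> \<le> tail_integral (\<lambda>t. \<Delta> * ek t + B * \<bar>ek t - em t\<bar>) x"
  proof (rule abs_tail_integral_le[OF exp_decay_diff[OF f1 f2] exp_decay_add[OF exp_decay_cmult[OF ek]
          exp_decay_cmult[OF E]] order_refl])
    fix t assume "t \<ge> x"
    have split: "f1 t - f2 t = ek t * (jost_remainder p V lam t - jost_remainder p W mu t)
        + (ek t - em t) * jost_remainder p W mu t"
      unfolding f1_def f2_def ek_def em_def by (simp add: algebra_simps)
    have "\<bar>f1 t - f2 t\<bar> \<le> ek t * \<Delta> + \<bar>ek t - em t\<bar> * B"
      unfolding split using abs_jost_remainder_diff_le[OF \<open>t \<ge> x\<close>] jost_solution.abs_Phi_le[OF W, of t]
      unfolding \<Delta>_def B_def ek_def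
      by (intro order_trans[OF abs_triangle_ineq add_mono]) (auto simp: abs_mult intro!: mult_mono)
    then show "\<bar>f1 t - f2 t\<bar> \<le> \<Delta> * ek t + B * \<bar>ek t - em t\<bar>" by (simp add: algebra_simps)
  qed
  also have "\<dots> = \<Delta> / (2*k) + B * \<bar>1/(2*k) - 1/(2*m)\<bar>"
    unfolding ek_def em_def by (rule tail_integral_exp_weight_bound[OF kpos mpos])
  finally show ?thesis unfolding \<Delta>_def B_def by simp
qed

lemma abs_jost_factor_diff_le:
  "\<bar>u x - w x\<bar> \<le> jost_bound p m * potential_mass p * \<bar>1/(2*k) - 1/(2*m)\<bar> * jost_bound p k"
proof -
  have kpos: "k > 0" using jost_solution.decay_rate_pos[OF V] .
  have "\<bar>u x - w x\<bar>
      \<le> (jost_bound p m * potential_mass p * \<bar>1/(2*k) - 1/(2*m)\<bar>) * exp (1/(2*k) * tail_integral (potential p) x)"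
  proof (rule gronwall_tail_integral[OF exp_decay_potential[OF p_pos] potential_nonneg[OF p_pos]])
    show "continuous_on UNIV (\<lambda>t. \<bar>u t - w t\<bar>)"
      using jost_solution.continuous_on_U[OF V] jost_solution.continuous_on_U[OF W]
      by (intro continuous_intros)
    show "\<exists>B. \<forall>t\<ge>a. \<bar>u t - w t\<bar> \<le> B" for a
      using jost_solution.abs_U_le[OF V] jost_solution.abs_U_le[OF W]
      by (intro exI[of _ "jost_bound p k + jost_bound p m"]) (auto intro: order_trans[OF abs_triangle_ineq4] add_mono)
  qed (use abs_jost_factor_diff_le_tail kpos p_pos potential_mass_nonneg[OF p_pos] in \<open>auto simp: jost_bound_def\<close>)
  also have "\<dots> \<le> (jost_bound p m * potential_mass p * \<bar>1/(2*k) - 1/(2*m)\<bar>) * jost_bound p k"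
    unfolding jost_bound_def tail_integral_potential[OF p_pos]
    using potential_tail_le_mass[OF p_pos, of x] kpos p_pos potential_mass_nonneg[OF p_pos]
    by (intro mult_left_mono) (auto simp: divide_right_mono)
  finally show ?thesis .
qed

end

section \<open>Continuous dependence on the spectral parameter\<close>

lemma uniform_limitI_bound:
  fixes f :: "'a \<Rightarrow> 'b \<Rightarrow> real"
  assumes "(\<omega> \<longlongrightarrow> 0) F" "\<forall>\<^sub>F s in F. \<forall>t\<in>S. \<bar>f s t - l t\<bar> \<le> \<omega> s"
  shows "uniform_limit S f l F"
proof (rule uniform_limitI)
  fix e :: real assume "e > 0"
  with assms(1) have "\<forall>\<^sub>F s in F. \<omega> s < e" by (rule order_tendstoD)
  with assms(2) show "\<forall>\<^sub>F s in F. \<forall>t\<in>S. dist (f s t) (l t) < e"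
    by eventually_elim (auto simp: dist_real_def)
qed

lemma uniform_limit_constant_in_space:
  fixes c :: "'a \<Rightarrow> real"
  shows "(c \<longlongrightarrow> l) F \<Longrightarrow> uniform_limit S (\<lambda>s t. c s) (\<lambda>t. l) F"
proof (rule uniform_limitI_bound[where \<omega>="\<lambda>s. \<bar>c s - l\<bar>"])
  assume "(c \<longlongrightarrow> l) F"
  then have "((\<lambda>s. c s - l) \<longlongrightarrow> 0) F" using tendsto_diff[OF _ tendsto_const, of c l F l] by simp
  then show "((\<lambda>s. \<bar>c s - l\<bar>) \<longlongrightarrow> 0) F" by (rule tendsto_rabs_zero)
qed simp

lemma uniform_limit_tendsto_compose:
  fixes f :: "'a \<Rightarrow> real \<Rightarrow> real"
  assumes "uniform_limit S f g F" "isCont g \<zeta>" "(y \<longlongrightarrow> \<zeta>) F" "\<forall>\<^sub>F s in F. y s \<in> S"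
  shows "((\<lambda>s. f s (y s)) \<longlongrightarrow> g \<zeta>) F"
proof (rule tendstoI)
  fix e :: real assume "e > 0"
  then have "\<forall>\<^sub>F s in F. dist (g (y s)) (g \<zeta>) < e/2"
    by (intro tendstoD isCont_tendsto_compose[OF assms(2,3)]) auto
  moreover note assms(4)
  moreover have "\<forall>\<^sub>F s in F. \<forall>t\<in>S. dist (f s t) (g t) < e/2"
    using uniform_limitD[OF assms(1), of "e/2"] \<open>e > 0\<close> by simp
  ultimately show "\<forall>\<^sub>F s in F. dist (f s (y s)) (g \<zeta>) < e"
  proof eventually_elim
    case (elim s)
    then have "dist (f s (y s)) (g (y s)) < e/2" by blast
    then show ?case using elim dist_triangle[of "f s (y s)" "g \<zeta>" "g (y s)"] by linarith
  qed
qed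

lemma bounded_image_real:
  fixes f :: "'a \<Rightarrow> real"
  shows "(\<And>t. t \<in> S \<Longrightarrow> \<bar>f t\<bar> \<le> B) \<Longrightarrow> bounded (f ` S)"
  by (auto simp: bounded_iff)

lemma abs_mult_exp_neg_le:
  fixes z t a k1 k2 :: real
  assumes "0 < k1" "k1 \<le> z" "z \<le> k2" "a \<le> t"
  shows "\<bar>t * exp (-z*t)\<bar> \<le> 1/k1 + \<bar>a\<bar> * exp (k2 * \<bar>a\<bar>)"
proof (cases "t \<ge> 0")
  case True
  have "k1 * t \<le> exp (k1*t)" using exp_ge_add_one_self[of "k1*t"] by linarith
  then have "t * exp (-k1*t) \<le> exp (k1*t) / k1 * exp (-k1*t)"
    using assms(1) by (intro mult_right_mono) (auto simp: field_simps)
  also have "\<dots> = 1/k1" by (simp add: exp_minus field_simps)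
  finally have "t * exp (-k1*t) \<le> 1/k1" .
  moreover have "t * exp (-z*t) \<le> t * exp (-k1*t)"
    using assms(2) True by (intro mult_left_mono) (auto simp: mult_right_mono)
  moreover have "\<bar>a\<bar> * exp (k2 * \<bar>a\<bar>) \<ge> 0" by simp
  moreover have "\<bar>t * exp (-z*t)\<bar> = t * exp (-z*t)" using True by simp
  ultimately show ?thesis by linarith
next
  case False
  then have ta: "\<bar>t\<bar> \<le> \<bar>a\<bar>" using assms(4) by simp
  have "-z*t = z * \<bar>t\<bar>" using False by simp
  also have "\<dots> \<le> k2 * \<bar>a\<bar>" using ta assms by (intro mult_mono) auto
  finally have "exp (-z*t) \<le> exp (k2 * \<bar>a\<bar>)" by simp
  then have "\<bar>t * exp (-z*t)\<bar> \<le> \<bar>a\<bar> * exp (k2 * \<bar>a\<bar>)" using ta by (simp add: abs_mult mult_mono)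
  moreover have "1/k1 > 0" using assms(1) by simp
  ultimately show ?thesis by linarith
qed

lemma abs_exp_neg_mult_diff_le:
  fixes m k t a k1 k2 :: real
  assumes "0 < k1" "k1 \<le> m" "m \<le> k2" "k1 \<le> k" "k \<le> k2" "a \<le> t"
  shows "\<bar>exp (-m*t) - exp (-k*t)\<bar> \<le> \<bar>m - k\<bar> * (1/k1 + \<bar>a\<bar> * exp (k2 * \<bar>a\<bar>))"
proof -
  define L where "L = 1/k1 + \<bar>a\<bar> * exp (k2 * \<bar>a\<bar>)"
  have ordered: "\<bar>exp (-hi*t) - exp (-lo*t)\<bar> \<le> (hi - lo) * L"
    if "k1 \<le> lo" "lo \<le> hi" "hi \<le> k2" for lo hi
  proof (cases "lo = hi")
    case False
    then have "lo < hi" using that by simp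
    moreover have "((\<lambda>s. exp (-s*t)) has_real_derivative - t * exp (-s*t)) (at s)" for s
      by (auto intro!: derivative_eq_intros)
    ultimately obtain z where z: "lo < z" "z < hi" "exp (-hi*t) - exp (-lo*t) = (hi - lo) * (- t * exp (-z*t))"
      using MVT2[of lo hi "\<lambda>s. exp (-s*t)" "\<lambda>s. - t * exp (-s*t)"] by blast
    have "\<bar>- t * exp (-z*t)\<bar> \<le> L"
      unfolding L_def using abs_mult_exp_neg_le[OF assms(1) _ _ assms(6), of z k2] z that by simp
    then show ?thesis using z \<open>lo < hi\<close> by (simp add: abs_mult mult_left_mono)
  qed simp
  show ?thesis
    using ordered[of k m] ordered[of m k] assms unfolding L_def
    by (cases "k \<le> m") (auto simp: abs_minus_commute)
qed

lemma bounded_exp_neg_mult_atLeast: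
  fixes \<kappa> :: real
  assumes "\<kappa> \<ge> 0"
  shows "bounded ((\<lambda>t. exp (-\<kappa>*t)) ` {a..})"
  by (rule bounded_image_real[where B="exp (-\<kappa>*a)"]) (use assms in \<open>auto simp: mult_left_mono\<close>)

lemma abs_mult_diff_le_close:
  fixes a b c d \<delta> M :: real
  assumes "\<bar>a - c\<bar> \<le> \<delta>" "\<bar>b - d\<bar> \<le> \<delta>" "\<bar>b\<bar> \<le> M" "\<bar>c\<bar> \<le> M"
  shows "\<bar>a * b - c * d\<bar> \<le> 2 * M * \<delta>"
proof -
  have "\<bar>a * b - c * d\<bar> \<le> \<bar>a - c\<bar> * \<bar>b\<bar> + \<bar>c\<bar> * \<bar>b - d\<bar>"
    unfolding abs_mult[symmetric] by (rule order_trans[OF _ abs_triangle_ineq]) (simp add: algebra_simps)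
  also have "\<dots> \<le> \<delta> * M + M * \<delta>"
    using assms by (intro add_mono mult_mono) auto
  finally show ?thesis by simp
qed

lemma tendsto_decay_rate: "(decay_rate \<longlongrightarrow> decay_rate lam0) (nhds lam0)"
  unfolding decay_rate_def by (intro tendsto_intros filterlim_ident)

lemma eventually_decay_rate_near:
  assumes "lam0 < 1"
  shows "\<forall>\<^sub>F mu in nhds lam0. mu < 1 \<and> decay_rate lam0 / 2 \<le> decay_rate mu \<and> decay_rate mu \<le> 2 * decay_rate lam0"
proof -
  have k0: "decay_rate lam0 > 0" using assms unfolding decay_rate_def by simp
  have "\<forall>\<^sub>F mu in nhds lam0. mu < 1" using assms by (intro eventually_nhds_in_open[of "{..<1}", simplified]) auto
  moreover have "\<forall>\<^sub>F mu in nhds lam0. dist (decay_rate mu) (decay_rate lam0) < decay_rate lam0 / 2"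
    using k0 by (intro tendstoD tendsto_decay_rate) simp
  ultimately show ?thesis
  proof eventually_elim
    case (elim mu)
    then have "decay_rate mu - decay_rate lam0 < decay_rate lam0 / 2"
      "decay_rate lam0 - decay_rate mu < decay_rate lam0 / 2"
      unfolding dist_real_def abs_less_iff by auto
    with elim show ?case by auto
  qed
qed

locale jost_family =
  fixes p :: real and V :: "real \<Rightarrow> real \<Rightarrow> real"
  assumes p: "p > 0" and sols: "\<And>lam. lam < 1 \<Longrightarrow> is_sol p lam (V lam)"
begin

lemma jost_solution: "lam < 1 \<Longrightarrow> jost_solution p lam (V lam)"
  by unfold_locales (use p sols in auto)

abbreviation DV :: "real \<Rightarrow> real \<Rightarrow> real" where "DV lam \<equiv> deriv (V lam)"

context
  fixes lam0 :: real
  assumes lam0: "lam0 < 1"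
begin

private abbreviation "k0 \<equiv> decay_rate lam0"
private abbreviation "U \<equiv> \<lambda>mu. jost_factor (V mu) mu"
private abbreviation "\<Phi> \<equiv> \<lambda>mu. jost_remainder p (V mu) mu"

private lemma k0_pos: "k0 > 0"
  using jost_solution.decay_rate_pos[OF jost_solution[OF lam0]] .

lemma jost_factor_close:
  "\<exists>\<omega>. (\<omega> \<longlongrightarrow> 0) (nhds lam0) \<and> (\<forall>\<^sub>F mu in nhds lam0. \<forall>t. \<bar>U mu t - U lam0 t\<bar> \<le> \<omega> mu)"
proof (intro exI conjI)
  define C where "C = jost_bound p k0 * potential_mass p"
  have "((\<lambda>mu. C * \<bar>1/(2 * decay_rate mu) - 1/(2*k0)\<bar> * jost_bound p (k0/2))
      \<longlongrightarrow> C * \<bar>1/(2*k0) - 1/(2*k0)\<bar> * jost_bound p (k0/2)) (nhds lam0)"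
    using k0_pos by (intro tendsto_intros tendsto_decay_rate) auto
  then show "((\<lambda>mu. C * \<bar>1/(2 * decay_rate mu) - 1/(2*k0)\<bar> * jost_bound p (k0/2)) \<longlongrightarrow> 0) (nhds lam0)"
    by simp
  show "\<forall>\<^sub>F mu in nhds lam0. \<forall>t. \<bar>U mu t - U lam0 t\<bar> \<le> C * \<bar>1/(2 * decay_rate mu) - 1/(2*k0)\<bar> * jost_bound p (k0/2)"
    using eventually_decay_rate_near[OF lam0]
  proof eventually_elim
    case (elim mu)
    have "C * \<bar>1/(2 * decay_rate mu) - 1/(2*k0)\<bar> * jost_bound p (decay_rate mu)
        \<le> C * \<bar>1/(2 * decay_rate mu) - 1/(2*k0)\<bar> * jost_bound p (k0/2)"
      using elim k0_pos p potential_mass_nonneg[OF p]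
      by (intro mult_left_mono jost_bound_antimono) (auto simp: C_def jost_bound_def)
    moreover have "\<bar>U mu t - U lam0 t\<bar> \<le> C * \<bar>1/(2 * decay_rate mu) - 1/(2*k0)\<bar> * jost_bound p (decay_rate mu)" for t
      using abs_jost_factor_diff_le[OF jost_solution jost_solution[OF lam0]] elim unfolding C_def by blast
    ultimately show ?case by (meson order_trans)
  qed
qed

lemma jost_factor_uniform_limit: "uniform_limit UNIV U (U lam0) (nhds lam0)"
  using jost_factor_close by (auto intro: uniform_limitI_bound)

lemma jost_remainder_uniform_limit: "uniform_limit UNIV \<Phi> (\<Phi> lam0) (nhds lam0)"
proof -
  obtain \<omega> where \<omega>: "(\<omega> \<longlongrightarrow> 0) (nhds lam0)"
    and close: "\<forall>\<^sub>F mu in nhds lam0. \<forall>t. \<bar>U mu t - U lam0 t\<bar> \<le> \<omega> mu"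
    using jost_factor_close by blast
  show ?thesis
  proof (rule uniform_limitI_bound)
    show "((\<lambda>mu. \<omega> mu * potential_mass p) \<longlongrightarrow> 0) (nhds lam0)"
      by (rule tendsto_mult_left_zero[OF \<omega>])
    show "\<forall>\<^sub>F mu in nhds lam0. \<forall>t\<in>UNIV. \<bar>\<Phi> mu t - \<Phi> lam0 t\<bar> \<le> \<omega> mu * potential_mass p"
      using close eventually_decay_rate_near[OF lam0]
    proof eventually_elim
      case (elim mu)
      then have mu: "jost_solution p mu (V mu)" using jost_solution by blast
      have "\<bar>\<Phi> mu t - \<Phi> lam0 t\<bar> = \<bar>tail_integral (\<lambda>s. potential p s * (U mu s - U lam0 s)) t\<bar>" for t
        unfolding jost_remainder_def
        by (subst tail_integral_diff[OF jost_solution.exp_decay_potential_U[OF mu]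
            jost_solution.exp_decay_potential_U[OF jost_solution[OF lam0]] order_refl, symmetric])
           (simp add: algebra_simps)
      also have "\<dots> t \<le> \<omega> mu * potential_mass p" for t
        using elim jost_solution.continuous_on_U[OF mu] jost_solution.continuous_on_U[OF jost_solution[OF lam0]]
        by (intro abs_tail_integral_potential_mult_le[OF p] continuous_intros) auto
      finally show ?case by blast
    qed
  qed
qed

lemma exp_decay_rate_uniform_limit:
  "uniform_limit {a..} (\<lambda>mu t. exp (- decay_rate mu * t)) (\<lambda>t. exp (-k0 * t)) (nhds lam0)"
proof (rule uniform_limitI_bound)
  define L where "L = 1/(k0/2) + \<bar>a\<bar> * exp (2*k0 * \<bar>a\<bar>)"
  have "((\<lambda>mu. \<bar>decay_rate mu - k0\<bar> * L) \<longlongrightarrow> \<bar>k0 - k0\<bar> * L) (nhds lam0)"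
    by (intro tendsto_intros tendsto_decay_rate)
  then show "((\<lambda>mu. \<bar>decay_rate mu - k0\<bar> * L) \<longlongrightarrow> 0) (nhds lam0)" by simp
  show "\<forall>\<^sub>F mu in nhds lam0. \<forall>t\<in>{a..}. \<bar>exp (- decay_rate mu * t) - exp (-k0 * t)\<bar> \<le> \<bar>decay_rate mu - k0\<bar> * L"
    using eventually_decay_rate_near[OF lam0]
  proof eventually_elim
    case (elim mu)
    show ?case
    proof
      fix t assume "t \<in> {a..}"
      then show "\<bar>exp (- decay_rate mu * t) - exp (-k0 * t)\<bar> \<le> \<bar>decay_rate mu - k0\<bar> * L"
        unfolding L_def using elim k0_pos by (intro abs_exp_neg_mult_diff_le) auto
    qed
  qed
qed

lemma V_uniform_limit: "uniform_limit {a..} V (V lam0) (nhds lam0)"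
proof -
  have "uniform_limit {a..} (\<lambda>mu t. exp (- decay_rate mu * t) * U mu t) (\<lambda>t. exp (-k0 * t) * U lam0 t) (nhds lam0)"
  proof (rule uniform_lim_mult[OF exp_decay_rate_uniform_limit
        uniform_limit_on_subset[OF jost_factor_uniform_limit subset_UNIV]])
    show "bounded ((\<lambda>t. exp (-k0 * t)) ` {a..})" using k0_pos by (intro bounded_exp_neg_mult_atLeast) simp
    show "bounded (U lam0 ` {a..})"
      by (rule bounded_image_real) (rule jost_solution.abs_U_le[OF jost_solution[OF lam0]])
  qed
  moreover have "\<forall>\<^sub>F mu in nhds lam0. \<forall>t\<in>{a..}. exp (- decay_rate mu * t) * U mu t = V mu t"
    using eventually_decay_rate_near[OF lam0]
    by eventually_elim (auto simp: jost_solution.V_eq[OF jost_solution])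
  ultimately show ?thesis
    by (rule uniform_limit_cong[THEN iffD1, rotated 2])
       (simp add: jost_solution.V_eq[OF jost_solution[OF lam0]])
qed

lemma DV_uniform_limit: "uniform_limit {a..} DV (DV lam0) (nhds lam0)"
proof -
  define Z where "Z = (\<lambda>mu t. decay_rate mu * U mu t - 2 * decay_rate mu + \<Phi> mu t)"
  have k: "uniform_limit UNIV (\<lambda>mu t. decay_rate mu) (\<lambda>t. k0) (nhds lam0)"
    by (rule uniform_limit_constant_in_space[OF tendsto_decay_rate])
  have k2: "uniform_limit UNIV (\<lambda>mu t. 2 * decay_rate mu) (\<lambda>t. 2 * k0) (nhds lam0)"
    by (intro uniform_limit_constant_in_space tendsto_mult_left tendsto_decay_rate)
  have kU: "uniform_limit UNIV (\<lambda>mu t. decay_rate mu * U mu t) (\<lambda>t. k0 * U lam0 t) (nhds lam0)"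
  proof (rule uniform_lim_mult[OF k jost_factor_uniform_limit])
    show "bounded ((\<lambda>t. k0) ` UNIV)" by (rule bounded_image_real[where B="\<bar>k0\<bar>"]) simp
    show "bounded (U lam0 ` UNIV)"
      by (rule bounded_image_real) (rule jost_solution.abs_U_le[OF jost_solution[OF lam0]])
  qed
  have "uniform_limit UNIV Z (Z lam0) (nhds lam0)"
    unfolding Z_def by (rule uniform_limit_add[OF uniform_limit_minus[OF kU k2] jost_remainder_uniform_limit])
  then have "uniform_limit {a..} (\<lambda>mu t. exp (- decay_rate mu * t) * Z mu t) (\<lambda>t. exp (-k0 * t) * Z lam0 t) (nhds lam0)"
  proof (rule uniform_lim_mult[OF exp_decay_rate_uniform_limit uniform_limit_on_subset[OF _ subset_UNIV]])
    show "bounded ((\<lambda>t. exp (-k0 * t)) ` {a..})" using k0_pos by (intro bounded_exp_neg_mult_atLeast) simp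
    have "\<bar>Z lam0 t\<bar> \<le> k0 * jost_bound p k0 + 2 * k0 + jost_bound p k0 * potential_mass p" for t
      using jost_solution.abs_U_le[OF jost_solution[OF lam0], of t]
        jost_solution.abs_Phi_le[OF jost_solution[OF lam0], of t] k0_pos
        abs_triangle_ineq[of "k0 * U lam0 t - 2 * k0" "\<Phi> lam0 t"] abs_triangle_ineq4[of "k0 * U lam0 t" "2 * k0"]
      unfolding Z_def by (simp add: abs_mult) (smt (verit) mult_left_mono)
    then show "bounded (Z lam0 ` {a..})" by (intro bounded_image_real)
  qed
  moreover have "\<forall>\<^sub>F mu in nhds lam0. \<forall>t\<in>{a..}. exp (- decay_rate mu * t) * Z mu t = DV mu t"
    using eventually_decay_rate_near[OF lam0]
    by eventually_elim (auto simp: jost_solution.deriv_V_eq[OF jost_solution] Z_def)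
  ultimately show ?thesis
    by (rule uniform_limit_cong[THEN iffD1, rotated 2])
       (simp add: jost_solution.deriv_V_eq[OF jost_solution[OF lam0]] Z_def)
qed

lemma V_uniform_exp_bound:
  "\<exists>C \<kappa>. \<kappa> > 0 \<and> (\<forall>\<^sub>F mu in nhds lam0. mu < 1 \<and> (\<forall>t\<ge>a. \<bar>V mu t\<bar> \<le> C * exp (-\<kappa>*t)))"
proof (intro exI conjI)
  define C where "C = jost_bound p (k0/2) * exp (2 * k0 * \<bar>a\<bar>)"
  show "k0/2 > 0" using k0_pos by simp
  show "\<forall>\<^sub>F mu in nhds lam0. mu < 1 \<and> (\<forall>t\<ge>a. \<bar>V mu t\<bar> \<le> C * exp (-(k0/2)*t))"
    using eventually_decay_rate_near[OF lam0]
  proof eventually_elim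
    case (elim mu)
    then have mu: "mu < 1" "k0/2 \<le> decay_rate mu" "decay_rate mu \<le> 2*k0" by auto
    have "\<bar>V mu t\<bar> \<le> C * exp (-(k0/2)*t)" if "t \<ge> a" for t
    proof -
      have "(decay_rate mu - k0/2) * (-a) \<le> (decay_rate mu - k0/2) * \<bar>a\<bar>"
        using mu(2) by (intro mult_left_mono) auto
      then have "-(decay_rate mu - k0/2)*a \<le> (decay_rate mu - k0/2) * \<bar>a\<bar>" by (simp add: algebra_simps)
      also have "\<dots> \<le> 2 * k0 * \<bar>a\<bar>" using mu k0_pos by (intro mult_right_mono) auto
      finally have shift: "exp (-(decay_rate mu - k0/2)*a) \<le> exp (2 * k0 * \<bar>a\<bar>)" by simp
      have "\<bar>V mu t\<bar> \<le> jost_bound p (decay_rate mu) * exp (- decay_rate mu * t)"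
        by (rule jost_solution.abs_V_le[OF jost_solution[OF mu(1)]])
      also have "\<dots> \<le> jost_bound p (k0/2) * (exp (-(decay_rate mu - k0/2)*a) * exp (-(k0/2)*t))"
        using mu(2) that k0_pos p
        by (intro mult_mono jost_bound_antimono exp_neg_mult_le_shift) (auto simp: jost_bound_def)
      also have "\<dots> \<le> C * exp (-(k0/2)*t)"
        unfolding C_def using shift by (simp add: jost_bound_def mult.assoc)
      finally show ?thesis .
    qed
    with mu show ?case by blast
  qed
qed

end

lemma V_tendsto_compose:
  assumes "lam < 1" "(f \<longlongrightarrow> lam) F" "(y \<longlongrightarrow> \<zeta>) F"
  shows "((\<lambda>s. V (f s) (y s)) \<longlongrightarrow> V lam \<zeta>) F"
    and "((\<lambda>s. DV (f s) (y s)) \<longlongrightarrow> DV lam \<zeta>) F"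
proof -
  have near: "\<forall>\<^sub>F s in F. y s \<in> {\<zeta> - 1..}"
    using order_tendstoD(1)[OF assms(3), of "\<zeta> - 1"] by (auto elim: eventually_mono)
  show "((\<lambda>s. V (f s) (y s)) \<longlongrightarrow> V lam \<zeta>) F"
    using jost_solution.continuous_on_V[OF jost_solution[OF assms(1)]]
    by (intro uniform_limit_tendsto_compose[OF filterlim_compose[OF V_uniform_limit[OF assms(1)] assms(2)] _ assms(3) near])
       (simp add: continuous_on_eq_continuous_at)
  show "((\<lambda>s. DV (f s) (y s)) \<longlongrightarrow> DV lam \<zeta>) F"
    using jost_solution.continuous_on_deriv_V[OF jost_solution[OF assms(1)]]
    by (intro uniform_limit_tendsto_compose[OF filterlim_compose[OF DV_uniform_limit[OF assms(1)] assms(2)] _ assms(3) near])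
       (simp add: continuous_on_eq_continuous_at)
qed

lemma exp_decay_V_mult:
  assumes "mu < 1" "nu < 1"
  shows "exp_decay (\<lambda>t. V mu t * V nu t) a"
proof (rule exp_decayI[where \<kappa>="decay_rate mu + decay_rate nu"
      and B="jost_bound p (decay_rate mu) * jost_bound p (decay_rate nu)"])
  interpret mu: jost_solution p mu "V mu" by (rule jost_solution[OF assms(1)])
  interpret nu: jost_solution p nu "V nu" by (rule jost_solution[OF assms(2)])
  show "continuous_on UNIV (\<lambda>t. V mu t * V nu t)"
    using mu.continuous_on_V nu.continuous_on_V by (intro continuous_intros)
  show "decay_rate mu + decay_rate nu > 0" using mu.decay_rate_pos nu.decay_rate_pos by simp
  fix t
  have "\<bar>V mu t * V nu t\<bar> \<le> (mu.M * exp (- decay_rate mu * t)) * (nu.M * exp (- decay_rate nu * t))"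
    unfolding abs_mult by (intro mult_mono mu.abs_V_le nu.abs_V_le) (auto simp: jost_bound_def)
  then show "\<bar>V mu t * V nu t\<bar> \<le> mu.M * nu.M * exp (- (decay_rate mu + decay_rate nu) * t)"
    by (simp add: algebra_simps flip: exp_add)
qed

lemma tail_integral_V_mult_tendsto:
  assumes lam: "lam < 1" and "(f \<longlongrightarrow> lam) F" "(g \<longlongrightarrow> lam) F" "(y \<longlongrightarrow> \<zeta>) F"
  shows "((\<lambda>s. tail_integral (\<lambda>t. V (f s) t * V (g s) t) (y s)) \<longlongrightarrow> tail_integral (\<lambda>t. V lam t * V lam t) \<zeta>) F"
proof -
  define a where "a = \<zeta> - 1"
  obtain C \<kappa> where \<kappa>: "\<kappa> > 0"
    and bound: "\<forall>\<^sub>F mu in nhds lam. mu < 1 \<and> (\<forall>t\<ge>a. \<bar>V mu t\<bar> \<le> C * exp (-\<kappa>*t))"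
    using V_uniform_exp_bound[OF lam] by blast
  have bound_f: "\<forall>\<^sub>F s in F. f s < 1 \<and> (\<forall>t\<ge>a. \<bar>V (f s) t\<bar> \<le> C * exp (-\<kappa>*t))"
    and bound_g: "\<forall>\<^sub>F s in F. g s < 1 \<and> (\<forall>t\<ge>a. \<bar>V (g s) t\<bar> \<le> C * exp (-\<kappa>*t))"
    using eventually_compose_filterlim[OF bound assms(2)] eventually_compose_filterlim[OF bound assms(3)]
    by simp_all
  have bound_lam: "\<forall>t\<ge>a. \<bar>V lam t\<bar> \<le> C * exp (-\<kappa>*t)"
    using eventually_nhds_x_imp_x[OF bound] by blast
  then have "0 \<le> C * exp (-\<kappa>*a)" by (meson abs_ge_zero order_refl order_trans)
  then have "C \<ge> 0" by (simp add: zero_le_mult_iff)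
  show ?thesis
  proof (rule tail_integral_tendsto_weighted[OF \<kappa> exp_decay_V_mult[OF lam lam] _ assms(4)])
    show "a < \<zeta>" unfolding a_def by simp
    show "\<forall>\<^sub>F s in F. exp_decay (\<lambda>t. V (f s) t * V (g s) t) a"
      using bound_f bound_g by eventually_elim (simp add: exp_decay_V_mult)
    fix \<epsilon> :: real assume "\<epsilon> > 0"
    define \<delta> where "\<delta> = \<epsilon> / (2*C + 1)"
    have \<delta>: "\<delta> > 0" "2 * C * \<delta> \<le> \<epsilon>" unfolding \<delta>_def using \<open>C \<ge> 0\<close> \<open>\<epsilon> > 0\<close> by (auto simp: field_simps)
    have close: "\<forall>\<^sub>F s in F. \<forall>t\<in>{a..}. dist (V (h s) t) (V lam t) < \<delta>" if "(h \<longlongrightarrow> lam) F" for h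
      using uniform_limitD[OF filterlim_compose[OF V_uniform_limit[OF lam] that] \<delta>(1)] .
    show "\<forall>\<^sub>F s in F. \<forall>t\<ge>a. \<bar>V (f s) t * V (g s) t - V lam t * V lam t\<bar> \<le> \<epsilon> * exp (-\<kappa>*t)"
      using close[OF assms(2)] close[OF assms(3)] bound_g
    proof eventually_elim
      case (elim s)
      show ?case
      proof (intro allI impI)
        fix t assume "t \<ge> a"
        have "\<bar>V (f s) t * V (g s) t - V lam t * V lam t\<bar> \<le> 2 * (C * exp (-\<kappa>*t)) * \<delta>"
          using elim bound_lam \<open>t \<ge> a\<close>
          by (intro abs_mult_diff_le_close) (auto simp: dist_real_def less_imp_le)
        also have "\<dots> \<le> \<epsilon> * exp (-\<kappa>*t)" using \<delta>(2) by (simp add: algebra_simps mult_right_mono)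
        finally show "\<bar>V (f s) t * V (g s) t - V lam t * V lam t\<bar> \<le> \<epsilon> * exp (-\<kappa>*t)" .
      qed
    qed
  qed
qed

lemma wronskian_tendsto_0:
  assumes "mu < 1" "lam < 1"
  shows "((\<lambda>x. V mu x * DV lam x - DV mu x * V lam x) \<longlongrightarrow> 0) at_top"
proof -
  interpret mu: jost_solution p mu "V mu" by (rule jost_solution[OF assms(1)])
  interpret lam: jost_solution p lam "V lam" by (rule jost_solution[OF assms(2)])
  define Dmu where "Dmu = decay_rate mu * mu.M + 2 * decay_rate mu + mu.M * potential_mass p"
  define Dlam where "Dlam = decay_rate lam * lam.M + 2 * decay_rate lam + lam.M * potential_mass p"
  define \<kappa> where "\<kappa> = decay_rate mu + decay_rate lam"
  have "\<bar>V mu x * DV lam x - DV mu x * V lam x\<bar> \<le> (mu.M * Dlam + Dmu * lam.M) * exp (-\<kappa>*x)" for x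
  proof -
    have "\<bar>V mu x * DV lam x - DV mu x * V lam x\<bar> \<le> \<bar>V mu x\<bar> * \<bar>DV lam x\<bar> + \<bar>DV mu x\<bar> * \<bar>V lam x\<bar>"
      unfolding abs_mult[symmetric] by (rule abs_triangle_ineq4)
    also have "\<dots> \<le> (mu.M * exp (- decay_rate mu * x)) * (Dlam * exp (- decay_rate lam * x))
        + (Dmu * exp (- decay_rate mu * x)) * (lam.M * exp (- decay_rate lam * x))"
      unfolding Dmu_def Dlam_def using mu.decay_rate_pos potential_mass_nonneg[OF p]
      by (intro add_mono mult_mono mu.abs_V_le lam.abs_V_le mu.abs_deriv_V_le lam.abs_deriv_V_le)
         (auto simp: jost_bound_def)
    finally show ?thesis unfolding \<kappa>_def by (simp add: algebra_simps flip: exp_add)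
  qed
  then have "\<forall>\<^sub>F x in at_top. norm (V mu x * DV lam x - DV mu x * V lam x)
      \<le> (mu.M * Dlam + Dmu * lam.M) * exp (-\<kappa>*x)"
    by simp
  moreover have "((\<lambda>x. (mu.M * Dlam + Dmu * lam.M) * exp (-\<kappa>*x)) \<longlongrightarrow> (mu.M * Dlam + Dmu * lam.M) * 0) at_top"
    unfolding \<kappa>_def using mu.decay_rate_pos lam.decay_rate_pos
    by (intro tendsto_intros tendsto_exp_neg_mult_at_top) simp
  ultimately show ?thesis by (simp add: Lim_null_comparison)
qed

lemma wronskian_eq:
  assumes mu: "mu < 1" and lam: "lam < 1"
  shows "V mu x * DV lam x - DV mu x * V lam x = -(mu - lam) * tail_integral (\<lambda>t. V mu t * V lam t) x"
proof -
  interpret mu: jost_solution p mu "V mu" by (rule jost_solution[OF mu])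
  interpret lam: jost_solution p lam "V lam" by (rule jost_solution[OF lam])
  have "V mu x * DV lam x - DV mu x * V lam x = tail_integral (\<lambda>t. -(mu - lam) * (V mu t * V lam t)) x"
  proof (rule tail_integral_unique[OF exp_decay_cmult[OF exp_decay_V_mult[OF mu lam, of "x - 1"]] _
        wronskian_tendsto_0[OF mu lam]])
    show "((\<lambda>x. V mu x * DV lam x - DV mu x * V lam x) has_real_derivative
        - (-(mu - lam) * (V mu y * V lam y))) (at y)" for y
      by (rule derivative_eq_intros mu.V_has_deriv lam.V_has_deriv mu.deriv_V_has_deriv
          lam.deriv_V_has_deriv refl)+ (simp add: algebra_simps)
  qed simp
  also have "\<dots> = -(mu - lam) * tail_integral (\<lambda>t. V mu t * V lam t) x"
    by (rule tail_integral_cmult[OF exp_decay_V_mult[OF mu lam] order_refl])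
  finally show ?thesis .
qed

end

section \<open>The branch of zeros\<close>

lemma mult_pos_if_close:
  fixes s A B :: real
  assumes "s * A > 0" "\<bar>B - A\<bar> < \<bar>A\<bar>"
  shows "s * B > 0"
proof -
  consider "A > 0" | "A < 0" using assms(1) by fastforce
  then show ?thesis
  proof cases
    case 1
    then have "s > 0" "B > 0" using assms by (auto simp: zero_less_mult_iff abs_less_iff)
    then show ?thesis by simp
  next
    case 2
    then have "s < 0" "B < 0" using assms by (auto simp: zero_less_mult_iff abs_less_iff)
    then show ?thesis by (simp add: mult_neg_neg)
  qed
qed

context jost_family
begin

lemma increment_sign_if_deriv_sign:
  assumes "lam < 1" "y1 < y2" "\<And>x. y1 \<le> x \<Longrightarrow> x \<le> y2 \<Longrightarrow> s * DV lam x > 0"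
  shows "s * (V lam y2 - V lam y1) > 0"
proof -
  obtain z where z: "y1 < z" "z < y2" "V lam y2 - V lam y1 = (y2 - y1) * DV lam z"
    using MVT2[OF assms(2), of "V lam" "DV lam"] jost_solution.V_has_deriv[OF jost_solution[OF assms(1)]]
    by blast
  then have "s * (V lam y2 - V lam y1) = (y2 - y1) * (s * DV lam z)" by simp
  also have "\<dots> > 0" using assms(2) assms(3)[of z] z by simp
  finally show ?thesis .
qed

lemma zero_between:
  assumes "lam < 1" "y1 < y2" "s * V lam y1 < 0" "s * V lam y2 > 0"
  shows "\<exists>z. y1 < z \<and> z < y2 \<and> V lam z = 0"
proof -
  have cont: "continuous_on {y1..y2} (V lam)"
    using jost_solution.continuous_on_V[OF jost_solution[OF assms(1)]] by (rule continuous_on_subset) simp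
  obtain z where z: "y1 \<le> z" "z \<le> y2" "V lam z = 0"
  proof (cases "s > 0")
    case True
    then have "V lam y1 < 0" "V lam y2 > 0" using assms(3,4) by (auto simp: zero_less_mult_iff mult_less_0_iff)
    then show ?thesis using IVT'[of "V lam" y1 0 y2] cont assms(2) that by auto
  next
    case False
    then have "V lam y1 > 0" "V lam y2 < 0" using assms(3,4) by (auto simp: zero_less_mult_iff mult_less_0_iff)
    then show ?thesis using IVT2'[of "V lam" y2 0 y1] cont assms(2) that by auto
  qed
  moreover have "z \<noteq> y1" "z \<noteq> y2" using z assms(3,4) by auto
  ultimately show ?thesis by force
qed

lemma zero_between_persists:
  assumes "lam < 1" "y1 < y2" "s * V lam y1 < 0" "s * V lam y2 > 0"
  shows "\<forall>\<^sub>F mu in nhds lam. \<exists>z. y1 < z \<and> z < y2 \<and> V mu z = 0"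
proof -
  define m where "m = min \<bar>V lam y1\<bar> \<bar>V lam y2\<bar>"
  have "m > 0" unfolding m_def using assms(3,4) by auto
  have "\<forall>\<^sub>F mu in nhds lam. \<forall>t\<in>{y1..}. dist (V mu t) (V lam t) < m"
    by (rule uniform_limitD[OF V_uniform_limit[OF assms(1)] \<open>m > 0\<close>])
  with eventually_decay_rate_near[OF assms(1)] show ?thesis
  proof eventually_elim
    case (elim mu)
    then have "dist (V mu y1) (V lam y1) < m" "dist (V mu y2) (V lam y2) < m" using assms(2) by auto
    then have "\<bar>V mu y1 - V lam y1\<bar> < \<bar>V lam y1\<bar>" "\<bar>V mu y2 - V lam y2\<bar> < \<bar>V lam y2\<bar>"
      unfolding m_def dist_real_def by auto
    then have "(- s) * V mu y1 > 0" "s * V mu y2 > 0"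
      using mult_pos_if_close[of "-s" "V lam y1"] mult_pos_if_close[OF assms(4)] assms(3) by auto
    then show ?case using zero_between[of mu y1 y2 s] elim assms(2) by auto
  qed
qed

end

text \<open>The zero \<open>x\<^sub>1\<close> of \<open>v(\<cdot>; \<lambda>\<^sub>1)\<close> is isolated in a box \<open>|\<lambda> - \<lambda>\<^sub>1| < \<delta>, |x - x\<^sub>1| < \<rho>\<close> on which
  \<open>v'\<close> has the fixed sign of \<open>s\<^sub>0\<close>; the zero in the box defines the branch.\<close>
locale jost_zero_box = jost_family +
  fixes lam1 x1 s0 \<rho> \<delta> :: real
  assumes lam1: "lam1 < 1" and \<rho>: "\<rho> > 0" and \<delta>: "\<delta> > 0" "\<delta> \<le> 1 - lam1"
    and deriv_sign: "\<And>mu x. \<bar>mu - lam1\<bar> < \<delta> \<Longrightarrow> \<bar>x - x1\<bar> < \<rho> \<Longrightarrow> s0 * DV mu x > 0"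
    and zero_exists: "\<And>mu. \<bar>mu - lam1\<bar> < \<delta> \<Longrightarrow> \<exists>z. \<bar>z - x1\<bar> < \<rho>/2 \<and> V mu z = 0"
    and zero_at_lam1: "V lam1 x1 = 0"
begin

lemma in_box_lt_1: "\<bar>mu - lam1\<bar> < \<delta> \<Longrightarrow> mu < 1"
  using \<delta> by linarith

lemma eventually_in_box: "\<bar>lam - lam1\<bar> < \<delta> \<Longrightarrow> \<forall>\<^sub>F mu in nhds lam. \<bar>mu - lam1\<bar> < \<delta>"
  by (rule eventually_nhds_in_open[of "{mu. \<bar>mu - lam1\<bar> < \<delta>}", simplified])
     (auto intro!: open_Collect_less continuous_intros)

lemma zero_in_box_unique:
  assumes mu: "\<bar>mu - lam1\<bar> < \<delta>" and "\<bar>za - x1\<bar> < \<rho>" "\<bar>zb - x1\<bar> < \<rho>" "V mu za = 0" "V mu zb = 0"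
  shows "za = zb"
proof (rule ccontr)
  assume "za \<noteq> zb"
  then have "s0 * (V mu (max za zb) - V mu (min za zb)) > 0"
    using assms(2,3) by (intro increment_sign_if_deriv_sign[OF in_box_lt_1[OF mu]] deriv_sign[OF mu]) auto
  moreover have "V mu (max za zb) = 0" "V mu (min za zb) = 0" using assms(4,5) by (auto simp: max_def min_def)
  ultimately show False by simp
qed

definition zero_branch :: "real \<Rightarrow> real" where
  "zero_branch mu = (THE z. \<bar>z - x1\<bar> < \<rho> \<and> V mu z = 0)"

lemma zero_branch_in_box:
  assumes mu: "\<bar>mu - lam1\<bar> < \<delta>"
  shows "\<bar>zero_branch mu - x1\<bar> < \<rho>/2" "V mu (zero_branch mu) = 0"
proof -
  obtain z where z: "\<bar>z - x1\<bar> < \<rho>/2" "V mu z = 0" using zero_exists[OF mu] by blast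
  have "zero_branch mu = z"
    unfolding zero_branch_def
    by (rule the_equality) (use z \<rho> zero_in_box_unique[OF mu, of _ z] in auto)
  then show "\<bar>zero_branch mu - x1\<bar> < \<rho>/2" "V mu (zero_branch mu) = 0" using z by auto
qed

lemma zero_branch_unique:
  assumes "\<bar>mu - lam1\<bar> < \<delta>" "\<bar>z - x1\<bar> < \<rho>" "V mu z = 0"
  shows "z = zero_branch mu"
proof -
  have "\<bar>zero_branch mu - x1\<bar> < \<rho>" using zero_branch_in_box(1)[OF assms(1)] \<rho> by linarith
  then show ?thesis using zero_in_box_unique[OF assms(1,2) _ assms(3) zero_branch_in_box(2)[OF assms(1)]] by blast
qed

lemma zero_branch_lam1: "zero_branch lam1 = x1"
  using zero_branch_unique[of lam1 x1] zero_at_lam1 \<rho> \<delta> by simp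

lemma deriv_at_zero_branch_nonzero: "\<bar>lam - lam1\<bar> < \<delta> \<Longrightarrow> DV lam (zero_branch lam) \<noteq> 0"
  using deriv_sign[of lam "zero_branch lam"] zero_branch_in_box(1)[of lam] \<rho> by force

lemma sign_around_zero:
  assumes lam: "\<bar>lam - lam1\<bar> < \<delta>" and "V lam \<zeta> = 0" "e > 0" "\<bar>\<zeta> - x1\<bar> < \<rho> - e"
  shows "s0 * V lam (\<zeta> + e) > 0" "s0 * V lam (\<zeta> - e) < 0"
proof -
  have "s0 * (V lam (\<zeta> + e) - V lam \<zeta>) > 0" "s0 * (V lam \<zeta> - V lam (\<zeta> - e)) > 0"
    using assms(3,4) by (intro increment_sign_if_deriv_sign[OF in_box_lt_1[OF lam]] deriv_sign[OF lam]; auto)+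
  then show "s0 * V lam (\<zeta> + e) > 0" "s0 * V lam (\<zeta> - e) < 0" using assms(2) by simp_all
qed

lemma zero_branch_continuous:
  assumes lam: "\<bar>lam - lam1\<bar> < \<delta>"
  shows "isCont zero_branch lam"
  unfolding isCont_def
proof (rule tendstoI)
  fix e :: real assume "e > 0"
  define \<zeta> where "\<zeta> = zero_branch lam"
  define e' where "e' = min (e/2) (\<rho>/4)"
  have "e' \<le> \<rho>/4" unfolding e'_def by simp
  then have e': "e' > 0" "e' < e" "\<bar>\<zeta> - x1\<bar> < \<rho> - e'"
    unfolding e'_def \<zeta>_def using \<open>e > 0\<close> \<rho> zero_branch_in_box(1)[OF lam] by auto
  have signs: "s0 * V lam (\<zeta> - e') < 0" "s0 * V lam (\<zeta> + e') > 0"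
    using sign_around_zero[OF lam zero_branch_in_box(2)[OF lam] e'(1)] e'(3) unfolding \<zeta>_def by auto
  have "\<zeta> - e' < \<zeta> + e'" using e' by simp
  from zero_between_persists[OF in_box_lt_1[OF lam] this signs] eventually_in_box[OF lam]
  show "\<forall>\<^sub>F mu in at lam. dist (zero_branch mu) (zero_branch lam) < e"
    unfolding eventually_at_filter
  proof eventually_elim
    case (elim mu)
    then obtain z where z: "\<zeta> - e' < z" "z < \<zeta> + e'" "V mu z = 0" by auto
    have "z = zero_branch mu" using z e' elim by (intro zero_branch_unique) auto
    then show ?case using z e' unfolding \<zeta>_def dist_real_def by auto
  qed
qed

definition zero_branch_deriv :: "real \<Rightarrow> real" where
  "zero_branch_deriv lam = tail_integral (\<lambda>t. V lam t * V lam t) (zero_branch lam) / (DV lam (zero_branch lam))\<^sup>2"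

lemma tail_integral_square_pos:
  assumes lam: "\<bar>lam - lam1\<bar> < \<delta>"
  shows "tail_integral (\<lambda>t. V lam t * V lam t) (zero_branch lam) > 0"
proof (rule tail_integral_pos[OF exp_decay_V_mult[OF in_box_lt_1[OF lam] in_box_lt_1[OF lam], of "zero_branch lam - 1"]])
  have "s0 * V lam (zero_branch lam + \<rho>/4) > 0"
    using zero_branch_in_box[OF lam] \<rho> by (intro sign_around_zero(1)[OF lam]) auto
  then show "V lam (zero_branch lam + \<rho>/4) * V lam (zero_branch lam + \<rho>/4) \<noteq> 0" by auto
qed (use \<rho> in auto)

text \<open>Dividing the Wronskian identity at the two zeros by \<open>\<mu> - \<lambda>\<close> gives the difference quotient
  of the branch; the integral converges to \<open>\<integral>\<^sub>x\<^sub>0\<^sup>\<infinity> v\<^sup>2\<close> and \<open>v'\<close> at the zeros to \<open>v'(x\<^sub>0)\<close>.\<close>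
lemma zero_branch_has_deriv:
  assumes lam: "\<bar>lam - lam1\<bar> < \<delta>"
  shows "(zero_branch has_real_derivative zero_branch_deriv lam) (at lam)"
proof -
  have l1: "lam < 1" by (rule in_box_lt_1[OF lam])
  define \<zeta> where "\<zeta> = zero_branch lam"
  have zero: "V lam \<zeta> = 0" unfolding \<zeta>_def using zero_branch_in_box[OF lam] by auto
  define Q where "Q = (\<lambda>y. if y = \<zeta> then DV lam \<zeta> else V lam y / (y - \<zeta>))"
  have VQ: "V lam y = Q y * (y - \<zeta>)" for y unfolding Q_def using zero by auto
  have "((\<lambda>y. (V lam y - V lam \<zeta>) / (y - \<zeta>)) \<longlongrightarrow> DV lam \<zeta>) (at \<zeta>)"
    using jost_solution.V_has_deriv[OF jost_solution[OF l1], of \<zeta>] unfolding has_field_derivative_iff by simp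
  then have "(Q \<longlongrightarrow> DV lam \<zeta>) (at \<zeta>)"
    by (rule Lim_transform_eventually) (simp add: Q_def zero eventually_at_filter)
  then have "isCont Q \<zeta>" unfolding isCont_def Q_def by simp
  have branch: "(zero_branch \<longlongrightarrow> \<zeta>) (at lam)"
    unfolding \<zeta>_def using zero_branch_continuous[OF lam] by (simp add: isCont_def)
  have denom: "((\<lambda>mu. Q (zero_branch mu) * DV mu (zero_branch mu)) \<longlongrightarrow> DV lam \<zeta> * DV lam \<zeta>) (at lam)"
    using isCont_tendsto_compose[OF \<open>isCont Q \<zeta>\<close> branch] V_tendsto_compose(2)[OF l1 tendsto_ident_at branch]
    unfolding Q_def by (intro tendsto_mult) auto
  have nonzero: "DV lam \<zeta> * DV lam \<zeta> \<noteq> 0" using deriv_at_zero_branch_nonzero[OF lam] unfolding \<zeta>_def by simp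
  have "\<forall>\<^sub>F mu in at lam. tail_integral (\<lambda>t. V mu t * V lam t) (zero_branch mu)
      / (Q (zero_branch mu) * DV mu (zero_branch mu)) = (zero_branch mu - \<zeta>) / (mu - lam)"
    using tendsto_imp_eventually_ne[OF denom nonzero] eventually_in_box[OF lam]
    unfolding eventually_at_filter
  proof eventually_elim
    case (elim mu)
    define \<xi> where "\<xi> = zero_branch mu"
    have "V mu \<xi> = 0" unfolding \<xi>_def using zero_branch_in_box[of mu] elim by auto
    then have "(\<xi> - \<zeta>) * (Q \<xi> * DV mu \<xi>) = (mu - lam) * tail_integral (\<lambda>t. V mu t * V lam t) \<xi>"
      using wronskian_eq[OF in_box_lt_1 l1, of mu \<xi>] VQ[of \<xi>] elim by (simp add: algebra_simps)
    then show ?case using elim unfolding \<xi>_def by (simp add: field_simps)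
  qed
  moreover have "((\<lambda>mu. tail_integral (\<lambda>t. V mu t * V lam t) (zero_branch mu)
      / (Q (zero_branch mu) * DV mu (zero_branch mu))) \<longlongrightarrow> zero_branch_deriv lam) (at lam)"
    unfolding zero_branch_deriv_def \<zeta>_def[symmetric] power2_eq_square
    by (intro tendsto_divide denom nonzero tail_integral_V_mult_tendsto[OF l1 tendsto_ident_at tendsto_const branch])
  ultimately have "((\<lambda>mu. (zero_branch mu - zero_branch lam) / (mu - lam)) \<longlongrightarrow> zero_branch_deriv lam) (at lam)"
    unfolding \<zeta>_def by (rule Lim_transform_eventually[rotated])
  then show ?thesis unfolding has_field_derivative_iff by simp
qed

lemma zero_branch_deriv_continuous:
  assumes lam: "\<bar>lam - lam1\<bar> < \<delta>"
  shows "isCont zero_branch_deriv lam"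
proof -
  have l1: "lam < 1" by (rule in_box_lt_1[OF lam])
  have branch: "(zero_branch \<longlongrightarrow> zero_branch lam) (at lam)"
    using zero_branch_continuous[OF lam] by (simp add: isCont_def)
  show ?thesis
    unfolding isCont_def zero_branch_deriv_def
    by (intro tendsto_divide tendsto_power tail_integral_V_mult_tendsto[OF l1 tendsto_ident_at tendsto_ident_at branch]
        V_tendsto_compose(2)[OF l1 tendsto_ident_at branch]) (use deriv_at_zero_branch_nonzero[OF lam] in simp)
qed

lemma mem_ball_lam1: "lam \<in> ball lam1 r \<longleftrightarrow> \<bar>lam - lam1\<bar> < r"
  by (simp add: dist_real_def abs_minus_commute)

lemma zero_branch_C1: "zero_branch C1_differentiable_on ball lam1 \<delta>"
  unfolding C1_differentiable_on_def
proof (intro exI conjI ballI)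
  fix lam assume "lam \<in> ball lam1 \<delta>"
  then show "(zero_branch has_vector_derivative zero_branch_deriv lam) (at lam)"
    using zero_branch_has_deriv unfolding mem_ball_lam1 has_real_derivative_iff_has_vector_derivative by blast
next
  have "isCont zero_branch_deriv lam" if "lam \<in> ball lam1 \<delta>" for lam
    using zero_branch_deriv_continuous that unfolding mem_ball_lam1 by blast
  then show "continuous_on (ball lam1 \<delta>) zero_branch_deriv" by (simp add: continuous_at_imp_continuous_on)
qed

lemma simple_zero_branch:
  assumes "lam \<in> ball lam1 \<delta>"
  shows "simple_zero (V lam) (zero_branch lam)"
proof -
  have lam: "\<bar>lam - lam1\<bar> < \<delta>" using assms unfolding mem_ball_lam1 .
  have "(V lam has_real_derivative DV lam (zero_branch lam)) (at (zero_branch lam))"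
    by (rule jost_solution.V_has_deriv[OF jost_solution[OF in_box_lt_1[OF lam]]])
  then show ?thesis
    unfolding simple_zero_def using zero_branch_in_box(2)[OF lam] deriv_at_zero_branch_nonzero[OF lam]
    by (auto simp: real_differentiable_def)
qed

lemma deriv_zero_branch_lam1_pos: "deriv zero_branch lam1 > 0"
proof -
  have "\<bar>lam1 - lam1\<bar> < \<delta>" using \<delta> by simp
  then show ?thesis
    using DERIV_imp_deriv[OF zero_branch_has_deriv] tail_integral_square_pos deriv_at_zero_branch_nonzero
    unfolding zero_branch_deriv_def by simp
qed

text \<open>Another \<open>C\<^sup>1\<close> branch of zeros through \<open>(\<lambda>\<^sub>1, x\<^sub>1)\<close> stays in the box near \<open>\<lambda>\<^sub>1\<close>,
  where the zero is unique.\<close>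
lemma zero_branch_locally_unique:
  assumes "\<epsilon> > 0" "y C1_differentiable_on ball lam1 \<epsilon>"
    "\<forall>lam\<in>ball lam1 \<epsilon>. simple_zero (V lam) (y lam)" "y lam1 = x1"
  shows "\<exists>\<eta>>0. \<forall>lam\<in>ball lam1 \<eta>. y lam = zero_branch lam"
proof -
  have "continuous_on (ball lam1 \<epsilon>) y" using assms(2) C1_differentiable_imp_continuous_on by blast
  then have "isCont y lam1" using assms(1) by (simp add: continuous_on_eq_continuous_at)
  then obtain d where d: "d > 0" "\<And>lam. dist lam lam1 < d \<Longrightarrow> dist (y lam) x1 < \<rho>"
    using assms(4) \<rho> unfolding continuous_at_eps_delta by blast
  show ?thesis
  proof (intro exI[of _ "min d (min \<delta> \<epsilon>)"] conjI ballI)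
    show "min d (min \<delta> \<epsilon>) > 0" using d \<delta> assms(1) by simp
    fix lam assume "lam \<in> ball lam1 (min d (min \<delta> \<epsilon>))"
    then show "y lam = zero_branch lam"
      using d(2)[of lam] assms(3) unfolding simple_zero_def
      by (intro zero_branch_unique) (auto simp: mem_ball_lam1 dist_real_def abs_minus_commute)
  qed
qed

end

context jost_family
begin

lemma eventually_deriv_sign_near:
  assumes lam1: "lam1 < 1" and "DV lam1 x1 \<noteq> 0"
  obtains \<rho> where "\<rho> > 0" "\<forall>\<^sub>F mu in nhds lam1. \<forall>x. \<bar>x - x1\<bar> < \<rho> \<longrightarrow> DV lam1 x1 * DV mu x > 0"
proof -
  define s0 where "s0 = DV lam1 x1"
  have s0: "\<bar>s0\<bar>/2 > 0" "s0 * s0 > 0"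
    using assms(2) unfolding s0_def by (auto simp: zero_less_mult_iff)
  have "isCont (DV lam1) x1"
    using jost_solution.continuous_on_deriv_V[OF jost_solution[OF lam1]] by (simp add: continuous_on_eq_continuous_at)
  then obtain \<rho> where \<rho>: "\<rho> > 0" "\<And>x. \<bar>x - x1\<bar> < \<rho> \<Longrightarrow> \<bar>DV lam1 x - s0\<bar> < \<bar>s0\<bar>/2"
    using s0 unfolding continuous_at_eps_delta s0_def dist_real_def by blast
  have "\<forall>\<^sub>F mu in nhds lam1. \<forall>x. \<bar>x - x1\<bar> < \<rho> \<longrightarrow> s0 * DV mu x > 0"
    using uniform_limitD[OF DV_uniform_limit[OF lam1, of "x1 - \<rho>"] s0(1)]
  proof eventually_elim
    case (elim mu)
    show ?case
    proof (intro allI impI mult_pos_if_close[OF s0(2)])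
      fix x assume x: "\<bar>x - x1\<bar> < \<rho>"
      then have "\<bar>DV mu x - DV lam1 x\<bar> < \<bar>s0\<bar>/2" using elim by (auto simp: dist_real_def)
      then show "\<bar>DV mu x - s0\<bar> < \<bar>s0\<bar>" using \<rho>(2)[OF x] by linarith
    qed
  qed
  then show ?thesis using that \<rho>(1) unfolding s0_def by blast
qed

lemma jost_zero_box_exists:
  assumes lam1: "lam1 < 1" and "simple_zero (V lam1) x1"
  obtains s0 \<rho> \<delta> where "jost_zero_box p V lam1 x1 s0 \<rho> \<delta>"
proof -
  define s0 where "s0 = DV lam1 x1"
  have zero: "V lam1 x1 = 0" and "s0 \<noteq> 0" using assms(2) unfolding simple_zero_def s0_def by auto
  then obtain \<rho> where \<rho>: "\<rho> > 0"
    and sign: "\<forall>\<^sub>F mu in nhds lam1. \<forall>x. \<bar>x - x1\<bar> < \<rho> \<longrightarrow> s0 * DV mu x > 0"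
    using eventually_deriv_sign_near[OF lam1] unfolding s0_def by blast
  have "s0 * (V lam1 x1 - V lam1 (x1 - \<rho>/4)) > 0" "s0 * (V lam1 (x1 + \<rho>/4) - V lam1 x1) > 0"
    using eventually_nhds_x_imp_x[OF sign] \<rho> by (intro increment_sign_if_deriv_sign[OF lam1]; force)+
  then have "s0 * V lam1 (x1 - \<rho>/4) < 0" "s0 * V lam1 (x1 + \<rho>/4) > 0" using zero by simp_all
  from zero_between_persists[OF lam1 _ this] sign \<rho>
  have "\<forall>\<^sub>F mu in nhds lam1. (\<forall>x. \<bar>x - x1\<bar> < \<rho> \<longrightarrow> s0 * DV mu x > 0)
      \<and> (\<exists>z. x1 - \<rho>/4 < z \<and> z < x1 + \<rho>/4 \<and> V mu z = 0)"
    by (simp add: eventually_conj_iff)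
  then obtain d where d: "d > 0" "\<And>mu. dist mu lam1 < d \<Longrightarrow> (\<forall>x. \<bar>x - x1\<bar> < \<rho> \<longrightarrow> s0 * DV mu x > 0)
      \<and> (\<exists>z. x1 - \<rho>/4 < z \<and> z < x1 + \<rho>/4 \<and> V mu z = 0)"
    unfolding eventually_nhds_metric by blast
  define \<delta> where "\<delta> = min d (1 - lam1)"
  have "jost_zero_box p V lam1 x1 s0 \<rho> \<delta>"
  proof
    show "lam1 < 1" "\<rho> > 0" "\<delta> > 0" "\<delta> \<le> 1 - lam1" "V lam1 x1 = 0"
      using lam1 \<rho> d zero unfolding \<delta>_def by auto
    fix mu assume "\<bar>mu - lam1\<bar> < \<delta>"
    then have mu: "dist mu lam1 < d" unfolding \<delta>_def dist_real_def by simp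
    show "s0 * DV mu x > 0" if "\<bar>x - x1\<bar> < \<rho>" for x using d(2)[OF mu] that by blast
    obtain z where "x1 - \<rho>/4 < z" "z < x1 + \<rho>/4" "V mu z = 0" using d(2)[OF mu] by blast
    moreover from this have "\<bar>z - x1\<bar> < \<rho>/2" using \<rho> by linarith
    ultimately show "\<exists>z. \<bar>z - x1\<bar> < \<rho>/2 \<and> V mu z = 0" by blast
  qed
  then show ?thesis by (rule that)
qed
end

theorem lemma5p3:
  fixes p lam1 x1 :: real and V :: "real \<Rightarrow> real \<Rightarrow> real"
  assumes "p > 0"
    and "\<And>lam. lam < 1 \<Longrightarrow> is_sol p lam (V lam)"
    and "\<And>lam W. lam < 1 \<Longrightarrow> is_sol p lam W \<Longrightarrow> W = V lam"
    and "lam1 < 1"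
    and "simple_zero (V lam1) x1"
  shows "\<exists>\<delta>>0. \<exists>x0 :: real \<Rightarrow> real.
           ball lam1 \<delta> \<subseteq> {..<1} \<and>
           x0 C1_differentiable_on ball lam1 \<delta> \<and>
           (\<forall>lam\<in>ball lam1 \<delta>. simple_zero (V lam) (x0 lam)) \<and>
           x0 lam1 = x1 \<and>
           deriv x0 lam1 > 0 \<and>
           (\<forall>\<epsilon>>0. \<forall>y :: real \<Rightarrow> real.
              (ball lam1 \<epsilon> \<subseteq> {..<1} \<and> y C1_differentiable_on ball lam1 \<epsilon> \<and>
               (\<forall>lam\<in>ball lam1 \<epsilon>. simple_zero (V lam) (y lam)) \<and> y lam1 = x1)
              \<longrightarrow> (\<exists>\<eta>>0. \<forall>lam\<in>ball lam1 \<eta>. y lam = x0 lam))"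
proof -
  interpret jost_family p V using assms(1,2) by unfold_locales
  obtain s0 \<rho> \<delta> where "jost_zero_box p V lam1 x1 s0 \<rho> \<delta>"
    using jost_zero_box_exists[OF assms(4,5)] .
  then interpret jost_zero_box p V lam1 x1 s0 \<rho> \<delta> .
  show ?thesis
  proof (intro exI[of _ \<delta>] exI[of _ zero_branch] conjI)
    show "\<delta> > 0" "zero_branch C1_differentiable_on ball lam1 \<delta>" "zero_branch lam1 = x1"
      "deriv zero_branch lam1 > 0"
      by (fact \<delta> zero_branch_C1 zero_branch_lam1 deriv_zero_branch_lam1_pos)+
    show "ball lam1 \<delta> \<subseteq> {..<1}" using in_box_lt_1 mem_ball_lam1 by blast
    show "\<forall>lam\<in>ball lam1 \<delta>. simple_zero (V lam) (zero_branch lam)" using simple_zero_branch by blast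
    show "\<forall>\<epsilon>>0. \<forall>y. ball lam1 \<epsilon> \<subseteq> {..<1} \<and> y C1_differentiable_on ball lam1 \<epsilon> \<and>
        (\<forall>lam\<in>ball lam1 \<epsilon>. simple_zero (V lam) (y lam)) \<and> y lam1 = x1 \<longrightarrow>
        (\<exists>\<eta>>0. \<forall>lam\<in>ball lam1 \<eta>. y lam = zero_branch lam)"
      using zero_branch_locally_unique by blast
  qed
qed

end
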